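(* Let $tr$ be the translation from types and sequents of the Lambek calculus $\mathrm{L}$ to types and graph sequents of the hypergraph Lambek calculus $\mathrm{HL}$ defined by $tr(p)=p$ for primitive $p$ (with $type(p)=2$), $tr(A/B)=tr(A)\div(\$\,tr(B))^\bullet$, $tr(B\backslash A)=tr(A)\div(tr(B)\,\$)^\bullet$, $tr(A\cdot B)=\times((tr(A)\,tr(B))^\bullet)$, and $tr(A_1,\dots,A_n\to A)=(tr(A_1)\dots tr(A_n))^\bullet\to tr(A)$. Then: (1) If $\mathrm{L}\vdash\Gamma\to C$, then $\mathrm{HL}\vdash tr(\Gamma\to C)$. (2) If $\mathrm{HL}\vdash G\to T$ is a derivable graph sequent all of whose types (the labels of edges of $G$ and the type $T$) belong to the image $tr(Tp(\mathrm{L}))$, then there exist a sequence of $\mathrm{L}$-types $\Gamma$ and an $\mathrm{L}$-type $C$ such that $G\to T=tr(\Gamma\to C)$ (in particular $G$ is a string graph) and $\mathrm{L}\vdash\Gamma\to C$.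
   Context: Lambek calculus $\mathrm{L}$: fix a countable set $Pr$ of primitive types. $Tp(\mathrm{L})$ is the least set containing $Pr$ and closed under $(B\backslash A)$, $(A/B)$, $(A\cdot B)$. A sequent is $\Gamma\to A$ with $\Gamma$ a nonempty finite sequence of types. The axioms are $p\to p$ ($p\in Pr$); the rules are (with $\Pi,\Psi$ nonempty, $\Gamma,\Delta$ possibly empty): from $\Pi\to A$ and $\Gamma,B,\Delta\to C$ infer $\Gamma,\Pi,A\backslash B,\Delta\to C$; from $A,\Pi\to B$ infer $\Pi\to A\backslash B$; from $\Gamma,A,B,\Delta\to C$ infer $\Gamma,A\cdot B,\Delta\to C$; from $\Pi\to A$ and $\Gamma,B,\Delta\to C$ infer $\Gamma,B/A,\Pi,\Delta\to C$; from $\Pi,A\to B$ infer $\Pi\to B/A$; from $\Pi\to A$ and $\Psi\to B$ infer $\Pi,\Psi\to A\cdot B$. Hypergraphs: given a label set $C$ with a function $type:C\to\mathbb{N}$, a hypergraph (graph) over $C$ is $G=\langle V,E,att,lab,ext\rangle$ with finite sets $V$ (nodes), $E$ (edges), $att:E\to V^\circledast$ (strings of pairwise distinct nodes), $lab:E\to C$ with $type(lab(e))=|att(e)|$, and $ext\in V^\circledast$ a string of pairwise distinct external nodes; $type(G)=|ext|$, $type(e)=|att(e)|$. Isomorphic graphs are identified. The handle $a^\bullet$ has nodes $v_1,\dots,v_n$, one edge labeled $a$ with $att=v_1\dots v_n$, and $ext=v_1\dots v_n$. The string graph $w^\bullet$ of $w=a_1\dots a_n$ ($n\ge1$) has nodes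 $v_0,\dots,v_n$, edges $e_1,\dots,e_n$ with $att(e_i)=v_{i-1}v_i$, $lab(e_i)=a_i$, and $ext=v_0v_n$. Hyperedge replacement $G[e/H]$ (when $type(e)=type(H)$): remove $e$, add a disjoint copy of $H$, and fuse the $i$-th external node of $H$ with the $i$-th attachment node of $e$; $G[e_1/H_1,\dots,e_k/H_k]$ denotes simultaneous replacement. $G[e:=a]$ denotes relabeling edge $e$ by $a$. $\mathrm{HL}$: fix a countable set $Pr$ of primitive types with $type:Pr\to\mathbb{N}$ such that infinitely many primitive types have each arity; a special symbol $\$$ may label edges of any arity. $Tp(\mathrm{HL})$ is the least set such that: $Pr\subseteq Tp(\mathrm{HL})$; if $N$ is a type and $D$ is a graph with exactly one edge $d_0$ labeled $\$$ and all other edges labeled by types, with $type(N)=type(D)$, then $N\div D$ is a type with $type(N\div D)=type_D(d_0)$; if $M$ is a graph whose edges are all labeled by types (possibly no edges), then $\times(M)$ is a type with $type(\times(M))=type(M)$. A graph sequent is $H\to A$ with $H$ a graph labeled by types, $A$ a type, $type(H)=type(A)$. Axioms: $p^\bullet\to p$, $p\in Pr$. Rules: $(\div\to)$: if $N\div D$ is a type with $E_D=\{d_0,\dots,d_k\}$, $lab(d_0)=\$$, and $e\in E_H$ is labeled $N$, then from $H\to A$, $H_1\to lab(d_1),\dots,H_k\to lab(d_k)$ infer $H[e/D][d_0:=N\div D][d_1/H_1,\dots,d_k/H_k]\to A$; $(\to\div)$: from $D[d_0/F]\to N$ infer $F\to N\div D$ (where $d_0$ is the $\$$-edge of $D$);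 $(\times\to)$: if $e\in E_G$ is labeled $\times(F)$, from $G[e/F]\to A$ infer $G\to A$; $(\to\times)$: if $E_M=\{m_1,\dots,m_l\}$ ($l\ge0$), from $H_1\to lab(m_1),\dots,H_l\to lab(m_l)$ infer $M[m_1/H_1,\dots,m_l/H_l]\to\times(M)$. $\mathrm{HL}\vdash H\to A$ means derivable from axioms by these rules. In the translation, primitive types of $\mathrm{L}$ are identified with primitive types of $\mathrm{HL}$ of type 2, and $(X\,Y)^\bullet$ is the string graph of a two-letter word where the $\$$-edge has type 2. *)

theory Defs
  imports Main
begin

text \<open>Primitive types are natural numbers.
  LBs B A stands for B\A, LSl A B stands for A/B, LPd A B stands for A*B.\<close>
datatype ltp = LPr nat | LBs ltp ltp | LSl ltp ltp | LPd ltp ltp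

inductive L_der :: "ltp list \<Rightarrow> ltp \<Rightarrow> bool" where
  L_ax: "L_der [LPr p] (LPr p)"
| L_bs_l: "\<Pi> \<noteq> [] \<Longrightarrow> L_der \<Pi> A \<Longrightarrow> L_der (\<Gamma> @ [B] @ \<Delta>) C
           \<Longrightarrow> L_der (\<Gamma> @ \<Pi> @ [LBs A B] @ \<Delta>) C"
| L_bs_r: "\<Pi> \<noteq> [] \<Longrightarrow> L_der (A # \<Pi>) B \<Longrightarrow> L_der \<Pi> (LBs A B)"
| L_pd_l: "L_der (\<Gamma> @ [A, B] @ \<Delta>) C \<Longrightarrow> L_der (\<Gamma> @ [LPd A B] @ \<Delta>) C"
| L_sl_l: "\<Pi> \<noteq> [] \<Longrightarrow> L_der \<Pi> A \<Longrightarrow> L_der (\<Gamma> @ [B] @ \<Delta>) C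
           \<Longrightarrow> L_der (\<Gamma> @ [LSl B A] @ \<Pi> @ \<Delta>) C"
| L_sl_r: "\<Pi> \<noteq> [] \<Longrightarrow> L_der (\<Pi> @ [A]) B \<Longrightarrow> L_der \<Pi> (LSl B A)"
| L_pd_r: "\<Pi> \<noteq> [] \<Longrightarrow> \<Psi> \<noteq> [] \<Longrightarrow> L_der \<Pi> A \<Longrightarrow> L_der \<Psi> B
           \<Longrightarrow> L_der (\<Pi> @ \<Psi>) (LPd A B)"

text \<open>A hypergraph: finite node set (of naturals), list of edges (label, attachment string),
  string of external nodes.  Edge identities are list positions.\<close>
datatype 'a hg = HG (hV: "nat set") (hE: "('a \<times> nat list) list") (hext: "nat list")

definition wf_hg :: "('a \<Rightarrow> nat list \<Rightarrow> bool) \<Rightarrow> 'a hg \<Rightarrow> bool" where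
  "wf_hg ok G \<longleftrightarrow> finite (hV G) \<and> distinct (hext G) \<and> set (hext G) \<subseteq> hV G \<and>
     (\<forall>x\<in>set (hE G). distinct (snd x) \<and> set (snd x) \<subseteq> hV G \<and> ok (fst x) (snd x))"

definition giso :: "('a \<Rightarrow> 'b \<Rightarrow> bool) \<Rightarrow> 'a hg \<Rightarrow> 'b hg \<Rightarrow> bool" where
  "giso R G H \<longleftrightarrow> (\<exists>f \<pi>. bij_betw f (hV G) (hV H) \<and>
      bij_betw \<pi> {..<length (hE G)} {..<length (hE H)} \<and>
      (\<forall>i<length (hE G). R (fst (hE G ! i)) (fst (hE H ! \<pi> i)) \<and>
                         map f (snd (hE G ! i)) = snd (hE H ! \<pi> i)) \<and>
      map f (hext G) = hext H)"

lemma giso_mono[mono]: "(\<And>x y. R x y \<longrightarrow> S x y) \<Longrightarrow> giso R G H \<longrightarrow> giso S G H"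
  unfolding giso_def by blast

lemma rel_option_mono'[mono]: "(\<And>x y. R x y \<longrightarrow> S x y) \<Longrightarrow> rel_option R a b \<longrightarrow> rel_option S a b"
  by (cases a; cases b) auto

text \<open>Hyperedge replacement G[i/H]: edge number i is removed, a disjoint copy of H is added
  (its internal nodes are shifted to fresh numbers), the j-th external node of H is fused with the
  j-th attachment node of the edge.\<close>
definition repl :: "'a hg \<Rightarrow> nat \<Rightarrow> 'a hg \<Rightarrow> 'a hg" where
  "repl G i H = (let att = snd (hE G ! i); s = Suc (Max (insert 0 (hV G)));
      fn = (\<lambda>v. case map_of (zip (hext H) att) v of Some u \<Rightarrow> u | None \<Rightarrow> s + v)
    in HG (hV G \<union> (\<lambda>v. s + v) ` (hV H - set (hext H)))
          (take i (hE G) @ drop (Suc i) (hE G) @ map (\<lambda>(l, a). (l, map fn a)) (hE H))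
          (hext G))"

text \<open>Simultaneous replacement G[i1/H1,...,ik/Hk] of the edges i with f i = Some H_i
  (edge numbers refer to G); performed in decreasing order of edge numbers.\<close>
definition repl_many :: "'a hg \<Rightarrow> (nat \<Rightarrow> 'a hg option) \<Rightarrow> 'a hg" where
  "repl_many G f = fold (\<lambda>i G'. case f i of None \<Rightarrow> G' | Some H \<Rightarrow> repl G' i H)
                        (rev [0..<length (hE G)]) G"

definition handle :: "'a \<Rightarrow> nat \<Rightarrow> 'a hg" where
  "handle a n = HG {0..<n} [(a, [0..<n])] [0..<n]"

definition string_graph :: "'a list \<Rightarrow> 'a hg" where
  "string_graph ws = HG {0..length ws} (map (\<lambda>i. (ws ! i, [i, Suc i])) [0..<length ws])
                        [0, length ws]"

text \<open>HPr a n: primitive type with name a and arity n.  HDiv N D: N \<div> D, where in D the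
  label None is the special symbol \$.  HTimes M: \<times>(M).\<close>
datatype htp = HPr nat nat | HDiv htp "htp option hg" | HTimes "htp hg"

fun tp_ar :: "htp \<Rightarrow> nat" where
  "tp_ar (HPr a n) = n"
| "tp_ar (HDiv N D) = (case filter (\<lambda>x. fst x = None) (hE D) of x # _ \<Rightarrow> length (snd x) | [] \<Rightarrow> 0)"
| "tp_ar (HTimes M) = length (hext M)"

definition ok_tp :: "htp \<Rightarrow> nat list \<Rightarrow> bool" where
  "ok_tp T a \<longleftrightarrow> length a = tp_ar T"

definition ok_opt :: "htp option \<Rightarrow> nat list \<Rightarrow> bool" where
  "ok_opt l a \<longleftrightarrow> (case l of None \<Rightarrow> True | Some T \<Rightarrow> length a = tp_ar T)"

inductive wf_tp :: "htp \<Rightarrow> bool" where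
  wf_pr: "wf_tp (HPr a n)"
| wf_div: "wf_tp N \<Longrightarrow> wf_hg ok_opt D \<Longrightarrow> length (filter (\<lambda>x. fst x = None) (hE D)) = 1 \<Longrightarrow>
           (\<forall>x\<in>set (hE D). \<forall>T. fst x = Some T \<longrightarrow> wf_tp T) \<Longrightarrow>
           tp_ar N = length (hext D) \<Longrightarrow> wf_tp (HDiv N D)"
| wf_times: "wf_hg ok_tp M \<Longrightarrow> (\<forall>x\<in>set (hE M). wf_tp (fst x)) \<Longrightarrow> wf_tp (HTimes M)"

text \<open>Equality of types up to isomorphism of the graphs occurring in them
  (isomorphic graphs are identified).\<close>
inductive teq :: "htp \<Rightarrow> htp \<Rightarrow> bool" where
  teq_pr: "teq (HPr a n) (HPr a n)"
| teq_div: "teq N N' \<Longrightarrow> giso (rel_option teq) D D' \<Longrightarrow> teq (HDiv N D) (HDiv N' D')"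
| teq_times: "giso teq M M' \<Longrightarrow> teq (HTimes M) (HTimes M')"

definition wf_seq :: "htp hg \<Rightarrow> htp \<Rightarrow> bool" where
  "wf_seq H A \<longleftrightarrow> wf_hg ok_tp H \<and> (\<forall>x\<in>set (hE H). wf_tp (fst x)) \<and> wf_tp A \<and>
                  length (hext H) = tp_ar A"

inductive HL_der :: "htp hg \<Rightarrow> htp \<Rightarrow> bool" where
  HL_ax: "HL_der (handle (HPr a n) n) (HPr a n)"
| HL_div_l: "wf_tp (HDiv N D) \<Longrightarrow> j0 < length (hE D) \<Longrightarrow> fst (hE D ! j0) = None \<Longrightarrow>
     HL_der H A \<Longrightarrow> i < length (hE H) \<Longrightarrow> fst (hE H ! i) = N \<Longrightarrow>
     (\<forall>j<length (hE D). j \<noteq> j0 \<longrightarrow> HL_der (Hs j) (the (fst (hE D ! j)))) \<Longrightarrow>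
     G = repl H i (map_hg the (repl_many
            (HG (hV D) ((hE D)[j0 := (Some (HDiv N D), snd (hE D ! j0))]) (hext D))
            (\<lambda>j. if j = j0 then None else Some (map_hg Some (Hs j))))) \<Longrightarrow>
     wf_seq G A \<Longrightarrow> HL_der G A"
| HL_div_r: "wf_tp (HDiv N D) \<Longrightarrow> j0 < length (hE D) \<Longrightarrow> fst (hE D ! j0) = None \<Longrightarrow>
     HL_der (map_hg the (repl D j0 (map_hg Some F))) N \<Longrightarrow>
     wf_seq F (HDiv N D) \<Longrightarrow> HL_der F (HDiv N D)"
| HL_times_l: "i < length (hE G) \<Longrightarrow> fst (hE G ! i) = HTimes F \<Longrightarrow>
     HL_der (repl G i F) A \<Longrightarrow> wf_seq G A \<Longrightarrow> HL_der G A"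
| HL_times_r: "wf_tp (HTimes M) \<Longrightarrow> (\<forall>j<length (hE M). HL_der (Hs j) (fst (hE M ! j))) \<Longrightarrow>
     G = repl_many M (\<lambda>j. Some (Hs j)) \<Longrightarrow> wf_seq G (HTimes M) \<Longrightarrow> HL_der G (HTimes M)"
| HL_iso: "HL_der H A \<Longrightarrow> giso teq H H' \<Longrightarrow> teq A A' \<Longrightarrow> wf_seq H' A' \<Longrightarrow> HL_der H' A'"

fun tr :: "ltp \<Rightarrow> htp" where
  "tr (LPr p) = HPr p 2"
| "tr (LSl A B) = HDiv (tr A) (string_graph [None, Some (tr B)])"
| "tr (LBs B A) = HDiv (tr A) (string_graph [Some (tr B), None])"
| "tr (LPd A B) = HTimes (string_graph [tr A, tr B])"

definition tr_seq :: "ltp list \<Rightarrow> ltp \<Rightarrow> htp hg \<times> htp" where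
  "tr_seq \<Gamma> C = (string_graph (map tr \<Gamma>), tr C)"

end

theory Submission
  imports Defs "HOL-Combinatorics.List_Permutation"
begin

(*
  Both directions rest on string-shaped graphs: graphs that are, up to the order of their edge
  list, the string graph of a word. Replacing an edge of a string-shaped graph by a string-shaped
  graph splices the two words; conversely, if a graph and a two-edge string combine by replacement
  into a string-shaped graph, then the graph is string-shaped as well and the words decompose
  accordingly.

  (1) is proved by induction on L-derivations: each rule of L is simulated by the rule of HL for
  the same connective, applied to string graphs. A/B and B\A form a single case that differs only
  in the side of the $-edge in the denominator.

  (2) is proved by induction on HL-derivations for graphs that are string-shaped up to isomorphism.
  When all types are translations, every product graph and every denominator is a two-edge string,
  and tr is injective modulo equality of types, so by the inversion lemmas the premises of the last
  rule are again sequents of translated types and the corresponding rule of L applies.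
*)

section \<open>String-shaped graphs\<close>

definition path_edges :: "nat list \<Rightarrow> 'a list \<Rightarrow> ('a \<times> nat list) list" where
  "path_edges vs ys = map (\<lambda>q. (ys ! q, [vs ! q, vs ! Suc q])) [0..<length ys]"

text \<open>Only the
  multiset of edges is fixed, since replacement appends the new edges at the end of the list.\<close>
definition is_path :: "'a hg \<Rightarrow> 'a list \<Rightarrow> nat list \<Rightarrow> bool" where
  "is_path G ys vs \<longleftrightarrow> distinct vs \<and> length vs = Suc (length ys) \<and> hV G = set vs \<and>
     mset (hE G) = mset (path_edges vs ys) \<and> hext G = [hd vs, last vs]"

lemma length_path_edges [simp]: "length (path_edges vs ys) = length ys"
  by (simp add: path_edges_def)

lemma path_edges_Nil [simp]: "path_edges vs [] = []"
  by (simp add: path_edges_def)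

lemma nth_path_edges: "q < length ys \<Longrightarrow> path_edges vs ys ! q = (ys ! q, [vs ! q, vs ! Suc q])"
  by (simp add: path_edges_def)

lemma set_path_edges:
  "e \<in> set (path_edges vs ys) \<longleftrightarrow> (\<exists>q<length ys. e = (ys ! q, [vs ! q, vs ! Suc q]))"
  by (auto simp: path_edges_def)

lemma map_fst_path_edges: "map fst (path_edges vs ys) = ys"
  by (rule nth_equalityI) (auto simp: nth_path_edges)

lemma path_edges_Cons_Cons: "path_edges (v # w # vs) (y # ys) = (y, [v, w]) # path_edges (w # vs) ys"
  by (rule nth_equalityI) (auto simp: nth_path_edges nth_Cons')

lemma path_edges_append:
  assumes "length vs1 = length ys1"
  shows "path_edges (vs1 @ u # vs2) (ys1 @ ys2) = path_edges (vs1 @ [u]) ys1 @ path_edges (u # vs2) ys2"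
  by (rule nth_equalityI)
     (use assms in \<open>auto simp: nth_path_edges nth_append nth_Cons' Suc_diff_Suc not_less less_Suc_eq\<close>)

lemma path_edges_map_nodes:
  "length vs = Suc (length ys) \<Longrightarrow>
   path_edges (map f vs) ys = map (\<lambda>(l, a). (l, map f a)) (path_edges vs ys)"
  by (rule nth_equalityI) (auto simp: nth_path_edges)

lemma path_edges_map_labels: "path_edges vs (map g ys) = map (map_prod g id) (path_edges vs ys)"
  by (rule nth_equalityI) (auto simp: nth_path_edges)

lemma path_edges_update:
  "k < length ys \<Longrightarrow> path_edges vs (ys[k := l]) = (path_edges vs ys)[k := (l, [vs ! k, vs ! Suc k])]"
  by (rule nth_equalityI) (auto simp: nth_path_edges nth_list_update)

lemma path_edges_last_edge:
  assumes "distinct vs" "length vs = Suc (length ys)" "(b, [d, v]) \<in> set (path_edges vs ys)"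
    "last vs = v"
  obtains ys' vs' where "ys = ys' @ [b]" "vs = vs' @ [d, v]"
    "path_edges vs ys = path_edges (vs' @ [d]) ys' @ [(b, [d, v])]"
proof -
  obtain q where q: "q < length ys" "b = ys ! q" "d = vs ! q" "v = vs ! Suc q"
    using assms(3) by (auto simp: set_path_edges)
  have "vs \<noteq> []" using assms(2) by auto
  then have "vs ! Suc q = vs ! length ys" using q(4) assms(2,4) by (simp add: last_conv_nth)
  then have sq: "Suc q = length ys" using assms(1,2) q(1) by (simp add: nth_eq_iff_index_eq)
  have "ys = take (Suc q) ys" using sq by simp
  then have ys: "ys = take q ys @ [b]" using q(1,2) by (simp add: take_Suc_conv_app_nth)
  have "vs = take (Suc q) vs @ [v]"
    using take_Suc_conv_app_nth[of "Suc q" vs] q(4) sq assms(2) by simp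
  moreover have "take (Suc q) vs = take q vs @ [d]"
    using q(1,3) assms(2) by (simp add: take_Suc_conv_app_nth)
  ultimately have vs: "vs = take q vs @ [d, v]" by simp
  have "path_edges (take q vs @ [d, v]) (take q ys @ [b]) = path_edges (take q vs @ [d]) (take q ys) @ [(b, [d, v])]"
    using path_edges_append[of "take q vs" "take q ys" d "[v]" "[b]"] q(1) assms(2)
    by (simp add: path_edges_Cons_Cons)
  then show ?thesis using that ys vs by metis
qed

lemma path_edges_first_edge:
  assumes "distinct vs" "length vs = Suc (length ys)" "(b, [u, d]) \<in> set (path_edges vs ys)"
    "hd vs = u"
  obtains ys' vs' where "ys = b # ys'" "vs = u # d # vs'"
    "path_edges vs ys = (b, [u, d]) # path_edges (d # vs') ys'"
proof -
  obtain q where q: "q < length ys" "b = ys ! q" "u = vs ! q" "d = vs ! Suc q"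
    using assms(3) by (auto simp: set_path_edges)
  have "vs \<noteq> []" using assms(2) by auto
  then have "vs ! q = vs ! 0" using q(3) assms(4) by (simp add: hd_conv_nth)
  then have "q = 0" using q(1) assms(1,2) by (simp add: nth_eq_iff_index_eq)
  then obtain ys' v w vs' where "ys = b # ys'" "vs = v # w # vs'" "v = u" "w = d"
    using q assms(2) by (cases ys; cases vs rule: remdups_adj.cases) auto
  then show ?thesis using that[of ys' vs'] by (simp add: path_edges_Cons_Cons)
qed

lemma path_edges_consecutive:
  assumes "distinct vs" "length vs = Suc (length ys)"
    and "(a, [x, m]) \<in> set (path_edges vs ys)" "(b, [m, y]) \<in> set (path_edges vs ys)"
  obtains Y1 Y2 V1 V2 where "ys = Y1 @ a # b # Y2" "vs = V1 @ x # m # y # V2" "length V1 = length Y1"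
    "path_edges vs ys = path_edges (V1 @ [x]) Y1 @ (a, [x, m]) # (b, [m, y]) # path_edges (y # V2) Y2"
proof -
  obtain q q' where q: "q < length ys" "a = ys ! q" "x = vs ! q" "m = vs ! Suc q"
    and q': "q' < length ys" "b = ys ! q'" "m = vs ! q'" "y = vs ! Suc q'"
    using assms(3,4) by (auto simp: set_path_edges)
  have "q' = Suc q" using q(1,4) q'(1,3) assms(1,2) by (simp add: nth_eq_iff_index_eq)
  define Y1 Y2 V1 V2 where "Y1 = take q ys" "Y2 = drop (Suc (Suc q)) ys"
    "V1 = take q vs" "V2 = drop (Suc (Suc (Suc q))) vs"
  have ys: "ys = Y1 @ a # b # Y2"
    using q q' \<open>q' = Suc q\<close> by (simp add: Y1_Y2_V1_V2_def Cons_nth_drop_Suc id_take_nth_drop)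
  have vs: "vs = V1 @ x # m # y # V2"
    using q q' \<open>q' = Suc q\<close> assms(2) by (simp add: Y1_Y2_V1_V2_def Cons_nth_drop_Suc id_take_nth_drop)
  have lV: "length V1 = length Y1" using q assms(2) by (simp add: Y1_Y2_V1_V2_def)
  have "path_edges vs ys = path_edges (V1 @ [x]) Y1 @ (a, [x, m]) # (b, [m, y]) # path_edges (y # V2) Y2"
    using path_edges_append[OF lV, of x "m # y # V2" "a # b # Y2"] ys vs by (simp add: path_edges_Cons_Cons)
  then show ?thesis using that ys vs lV by blast
qed

lemma is_path_string_graph: "is_path (string_graph ys) ys [0..<Suc (length ys)]"
proof -
  have "map (\<lambda>i. (ys ! i, [i, Suc i])) [0..<length ys] = path_edges [0..<Suc (length ys)] ys"
    by (rule nth_equalityI) (auto simp: nth_path_edges simp del: upt_Suc)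
  then show ?thesis
    unfolding is_path_def string_graph_def by (auto simp: atLeastAtMost_upt simp del: upt_Suc)
qed

lemma is_path_map_hg: "is_path G ys vs \<Longrightarrow> is_path (map_hg g G) (map g ys) vs"
  unfolding is_path_def hg.map_sel path_edges_map_labels by (simp add: mset_map)

lemma is_path_relabel:
  assumes G: "is_path G ys vs" and j: "j < length (hE G)" "hE G ! j = (ys ! k, [vs ! k, vs ! Suc k])"
    and k: "k < length ys"
  shows "is_path (HG (hV G) ((hE G)[j := (l, snd (hE G ! j))]) (hext G)) (ys[k := l]) vs"
proof -
  have "mset (path_edges vs ys) = mset (hE G)" using G unfolding is_path_def by simp
  then have "mset ((hE G)[j := (l, snd (hE G ! j))]) = mset (path_edges vs (ys[k := l]))"
    using j k by (simp add: mset_update path_edges_update nth_path_edges)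
  then show ?thesis using G unfolding is_path_def by simp
qed

lemma is_path_edge:
  "is_path G ys vs \<Longrightarrow> e \<in> set (hE G) \<Longrightarrow> \<exists>q<length ys. e = (ys ! q, [vs ! q, vs ! Suc q])"
  unfolding is_path_def by (metis set_mset_mset set_path_edges)

lemma is_path_labels: "is_path G ys vs \<Longrightarrow> fst ` set (hE G) = set ys"
  unfolding is_path_def by (metis set_mset_mset list.set_map map_fst_path_edges)

lemma is_path_wf:
  assumes "is_path G ys vs"
  shows "finite (hV G)" "set (hext G) \<subseteq> hV G" "length (hext G) = 2"
    "\<And>e. e \<in> set (hE G) \<Longrightarrow> distinct (snd e) \<and> set (snd e) \<subseteq> hV G \<and> length (snd e) = 2"
    "ys \<noteq> [] \<Longrightarrow> distinct (hext G)"
proof -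
  have d: "distinct vs" "length vs = Suc (length ys)" "hV G = set vs" "hext G = [hd vs, last vs]"
    using assms unfolding is_path_def by auto
  show "finite (hV G)" "length (hext G) = 2" using d by simp_all
  show "set (hext G) \<subseteq> hV G" using d by (cases vs) auto
  show "\<And>e. e \<in> set (hE G) \<Longrightarrow> distinct (snd e) \<and> set (snd e) \<subseteq> hV G \<and> length (snd e) = 2"
    using is_path_edge[OF assms] d by (fastforce simp: nth_eq_iff_index_eq)
  assume "ys \<noteq> []"
  then have "hd vs \<noteq> last vs"
    using d by (cases vs) (auto simp: hd_conv_nth last_conv_nth nth_eq_iff_index_eq)
  then show "distinct (hext G)" using d by simp
qed

lemma is_path_edge_from:
  assumes "is_path G ys vs" "(l, [vs ! k, w]) \<in> set (hE G)" "k < length vs"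
  shows "k < length ys" "l = ys ! k" "w = vs ! Suc k"
proof -
  obtain q where q: "q < length ys" "(l, [vs ! k, w]) = (ys ! q, [vs ! q, vs ! Suc q])"
    using is_path_edge[OF assms(1,2)] by blast
  have "k = q" using q assms(1,3) unfolding is_path_def by (simp add: nth_eq_iff_index_eq)
  then show "k < length ys" "l = ys ! k" "w = vs ! Suc k" using q by simp_all
qed

lemma is_path_unique:
  assumes G1: "is_path G ys vs" and G2: "is_path G ys' vs'"
  shows "ys = ys' \<and> vs = vs'"
proof -
  have d: "distinct vs" "distinct vs'" "set vs = set vs'"
    and l: "length vs = Suc (length ys)" "length vs' = Suc (length ys')"
    and h: "hd vs = hd vs'"
    using G1 G2 unfolding is_path_def by auto
  have lv: "length vs = length vs'" using d distinct_card by metis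
  then have ly: "length ys = length ys'" using l by simp
  have v0: "vs ! 0 = vs' ! 0" using h l by (cases vs; cases vs') auto
  have step: "vs ! Suc q = vs' ! Suc q \<and> ys ! q = ys' ! q"
    if q: "q < length ys" and vq: "vs ! q = vs' ! q" for q
  proof -
    have "(ys ! q, [vs' ! q, vs ! Suc q]) \<in> set (hE G)"
      using is_path_edge[OF G1] G1 q vq unfolding is_path_def
      by (metis nth_path_edges length_path_edges nth_mem set_mset_mset)
    then show ?thesis using is_path_edge_from[OF G2] q ly l by auto
  qed
  have key: "q \<le> length ys \<Longrightarrow> vs ! q = vs' ! q" for q
    by (induction q) (use v0 step in auto)
  have "vs = vs'" by (rule nth_equalityI) (use lv l key in \<open>auto simp: less_Suc_eq_le\<close>)
  moreover have "ys = ys'" by (rule nth_equalityI) (use ly key step in auto)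
  ultimately show ?thesis by simp
qed

lemma is_path_two_edges:
  assumes "is_path G [x, y] [g0, g1, g2]"
  shows "mset (hE G) = {#(x, [g0, g1]), (y, [g1, g2])#}" "hV G = {g0, g1, g2}"
    "hext G = [g0, g2]" "distinct [g0, g1, g2]"
  using assms unfolding is_path_def by (auto simp: path_edges_Cons_Cons)

lemma mset_eq_doubleton: "mset xs = {#a, b#} \<Longrightarrow> xs = [a, b] \<or> xs = [b, a]"
proof -
  assume m: "mset xs = {#a, b#}"
  then have "size (mset xs) = 2" by simp
  then have "length xs = 2" by simp
  then obtain x y where xs: "xs = [x, y]" by (auto simp: length_Suc_conv numeral_2_eq_2)
  then have "add_mset x {#y#} = add_mset a {#b#}" using m by simp
  then have "(x = a \<and> y = b) \<or> (x = b \<and> y = a)" by (simp add: add_eq_conv_ex) blast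
  then show ?thesis using xs by auto
qed

lemma is_path_two_edges_nth:
  assumes "is_path G [x, y] [g0, g1, g2]"
  obtains j where "j < 2" "length (hE G) = 2" "hE G ! j = (x, [g0, g1])" "hE G ! (1 - j) = (y, [g1, g2])"
  using mset_eq_doubleton[OF is_path_two_edges(1)[OF assms]] that[of 0] that[of 1] by auto

lemma giso_refl: "(\<And>e. e \<in> set (hE G) \<Longrightarrow> R (fst e) (fst e)) \<Longrightarrow> giso R G G"
  unfolding giso_def by (rule exI[of _ id], rule exI[of _ id]) (auto simp: bij_betw_def)

lemma giso_trans:
  assumes "giso R G H" "giso S H K"
  shows "giso (R OO S) G K"
proof -
  obtain f \<pi> where f: "bij_betw f (hV G) (hV H)"
    and p: "bij_betw \<pi> {..<length (hE G)} {..<length (hE H)}"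
    and e: "\<forall>i<length (hE G). R (fst (hE G ! i)) (fst (hE H ! \<pi> i)) \<and>
                              map f (snd (hE G ! i)) = snd (hE H ! \<pi> i)"
    and x: "map f (hext G) = hext H"
    using assms(1) unfolding giso_def by blast
  obtain g \<rho> where g: "bij_betw g (hV H) (hV K)"
    and r: "bij_betw \<rho> {..<length (hE H)} {..<length (hE K)}"
    and e2: "\<forall>i<length (hE H). S (fst (hE H ! i)) (fst (hE K ! \<rho> i)) \<and>
                               map g (snd (hE H ! i)) = snd (hE K ! \<rho> i)"
    and x2: "map g (hext H) = hext K"
    using assms(2) unfolding giso_def by blast
  show ?thesis unfolding giso_def
  proof (intro exI conjI allI impI)
    show "bij_betw (g \<circ> f) (hV G) (hV K)" using f g by (rule bij_betw_trans)
    show "bij_betw (\<rho> \<circ> \<pi>) {..<length (hE G)} {..<length (hE K)}" using p r by (rule bij_betw_trans)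
  next
    fix i assume i: "i < length (hE G)"
    then have pi: "\<pi> i < length (hE H)" using p bij_betwE by fastforce
    show "(R OO S) (fst (hE G ! i)) (fst (hE K ! (\<rho> \<circ> \<pi>) i))" using e e2 i pi by auto
    show "map (g \<circ> f) (snd (hE G ! i)) = snd (hE K ! (\<rho> \<circ> \<pi>) i)"
      using e e2 i pi by (simp flip: map_map)
  next
    show "map (g \<circ> f) (hext G) = hext K" using x x2 by (simp flip: map_map)
  qed
qed

text \<open>The converse relation is restricted to the labels of \<open>G\<close> because \<open>teq\<close> is symmetric only
  on well-formed types.\<close>
lemma giso_sym:
  assumes g: "giso R G H"
    and att: "\<forall>e\<in>set (hE G). set (snd e) \<subseteq> hV G" and ext: "set (hext G) \<subseteq> hV G"
  shows "giso (\<lambda>b a. a \<in> fst ` set (hE G) \<and> R a b) H G"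
proof -
  obtain f \<pi> where f: "bij_betw f (hV G) (hV H)"
    and p: "bij_betw \<pi> {..<length (hE G)} {..<length (hE H)}"
    and e: "\<forall>i<length (hE G). R (fst (hE G ! i)) (fst (hE H ! \<pi> i)) \<and>
                              map f (snd (hE G ! i)) = snd (hE H ! \<pi> i)"
    and x: "map f (hext G) = hext H"
    using g unfolding giso_def by blast
  define f' where "f' = inv_into (hV G) f"
  define \<pi>' where "\<pi>' = inv_into {..<length (hE G)} \<pi>"
  have mf: "map f' (map f xs) = xs" if "set xs \<subseteq> hV G" for xs
    using that f by (induct xs) (auto simp: f'_def bij_betw_def)
  show ?thesis unfolding giso_def
  proof (intro exI conjI allI impI)
    show "bij_betw f' (hV H) (hV G)" using f by (simp add: f'_def bij_betw_inv_into)
    show "bij_betw \<pi>' {..<length (hE H)} {..<length (hE G)}"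
      using p by (simp add: \<pi>'_def bij_betw_inv_into)
  next
    fix j assume j: "j < length (hE H)"
    have i: "\<pi>' j < length (hE G)"
      using p j unfolding \<pi>'_def by (metis bij_betwE bij_betw_inv_into lessThan_iff)
    have pj: "\<pi> (\<pi>' j) = j"
      using p j unfolding \<pi>'_def by (metis bij_betw_def f_inv_into_f lessThan_iff)
    show "fst (hE G ! \<pi>' j) \<in> fst ` set (hE G)" using i by simp
    show "R (fst (hE G ! \<pi>' j)) (fst (hE H ! j))" using e i pj by force
    have "snd (hE H ! j) = map f (snd (hE G ! \<pi>' j))" using e i pj by force
    then show "map f' (snd (hE H ! j)) = snd (hE G ! \<pi>' j)" using mf att i by simp
  next
    show "map f' (hext H) = hext G" using x mf[OF ext] by simp
  qed
qed

lemma giso_labels: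
  assumes "giso R G H" "e \<in> set (hE G)"
  shows "\<exists>e'\<in>set (hE H). R (fst e) (fst e')"
proof -
  obtain \<pi> where p: "bij_betw \<pi> {..<length (hE G)} {..<length (hE H)}"
    and r: "\<forall>i<length (hE G). R (fst (hE G ! i)) (fst (hE H ! \<pi> i))"
    using assms(1) unfolding giso_def by blast
  obtain i where "i < length (hE G)" "e = hE G ! i" using assms(2) by (auto simp: in_set_conv_nth)
  moreover from this have "\<pi> i < length (hE H)" using p by (auto dest: bij_betwE)
  ultimately show ?thesis using r by (metis nth_mem)
qed

lemma mset_map_nth_bij:
  assumes "bij_betw \<tau> {..<n} {..<length xs}"
  shows "mset (map (\<lambda>q. xs ! \<tau> q) [0..<n]) = mset xs"
proof -
  have "mset (map (\<lambda>q. xs ! \<tau> q) [0..<n]) = image_mset (nth xs) (image_mset \<tau> (mset_set {..<n}))"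
    by (simp add: mset_upt lessThan_atLeast0 multiset.map_comp o_def)
  also have "image_mset \<tau> (mset_set {..<n}) = mset_set {..<length xs}"
    using image_mset_mset_set[of \<tau>] assms by (simp add: bij_betw_def)
  also have "image_mset (nth xs) (mset_set {..<length xs}) = mset (map (nth xs) [0..<length xs])"
    by (simp add: mset_upt lessThan_atLeast0)
  also have "\<dots> = mset xs" by (simp only: map_nth)
  finally show ?thesis .
qed

lemma is_path_edge_bij:
  assumes "is_path G ys vs"
  obtains \<sigma> where "bij_betw \<sigma> {..<length ys} {..<length (hE G)}"
    "\<And>q. q < length ys \<Longrightarrow> hE G ! \<sigma> q = (ys ! q, [vs ! q, vs ! Suc q])"
  using permutation_Ex_bij[of "path_edges vs ys" "hE G"] assms
  unfolding is_path_def by (auto simp: nth_path_edges)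

lemma distinct_map_bij:
  assumes "distinct vs" "distinct ws" "length vs = length ws"
  obtains f where "bij_betw f (set vs) (set ws)" "map f vs = ws"
proof -
  define f where "f v = the (map_of (zip vs ws) v)" for v
  have "map f vs = ws"
    by (rule nth_equalityI) (use assms in \<open>auto simp: f_def map_of_zip_nth\<close>)
  moreover from this have "bij_betw f (set vs) (set ws)"
    using assms(2) distinct_map[of f vs] by (auto simp: bij_betw_def)
  ultimately show ?thesis using that by blast
qed

lemma is_path_giso:
  assumes G: "is_path G ys vs" and H: "is_path H zs ws" and R: "list_all2 R ys zs"
  shows "giso R G H"
proof -
  have len: "length zs = length ys" "length ws = length vs"
    using R G H list_all2_lengthD unfolding is_path_def by force+
  obtain \<sigma>G where \<sigma>G: "bij_betw \<sigma>G {..<length ys} {..<length (hE G)}"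
    "\<And>q. q < length ys \<Longrightarrow> hE G ! \<sigma>G q = (ys ! q, [vs ! q, vs ! Suc q])"
    using is_path_edge_bij[OF G] by blast
  obtain \<sigma>H where \<sigma>H: "bij_betw \<sigma>H {..<length ys} {..<length (hE H)}"
    "\<And>q. q < length ys \<Longrightarrow> hE H ! \<sigma>H q = (zs ! q, [ws ! q, ws ! Suc q])"
    using is_path_edge_bij[OF H] len by metis
  obtain f where f: "bij_betw f (set vs) (set ws)" "map f vs = ws"
    using distinct_map_bij G H len unfolding is_path_def by metis
  define \<pi> where "\<pi> = \<sigma>H \<circ> inv_into {..<length ys} \<sigma>G"
  show ?thesis unfolding giso_def
  proof (rule exI[of _ f], rule exI[of _ \<pi>], intro conjI allI impI)
    show "bij_betw f (hV G) (hV H)" using f G H unfolding is_path_def by simp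
    show "bij_betw \<pi> {..<length (hE G)} {..<length (hE H)}"
      unfolding \<pi>_def using \<sigma>G(1) \<sigma>H(1) by (blast intro: bij_betw_trans bij_betw_inv_into)
  next
    fix i assume "i < length (hE G)"
    then obtain q where q: "q < length ys" "i = \<sigma>G q"
      using \<sigma>G(1) by (metis bij_betw_def imageE lessThan_iff)
    then have "\<pi> i = \<sigma>H q" using \<sigma>G(1) by (simp add: \<pi>_def bij_betw_def inv_into_f_f)
    moreover have "f (vs ! q) = ws ! q" "f (vs ! Suc q) = ws ! Suc q"
      using f(2) q(1) len G unfolding is_path_def by (metis length_map nth_map less_SucI Suc_less_eq)+
    ultimately show "R (fst (hE G ! i)) (fst (hE H ! \<pi> i))"
      "map f (snd (hE G ! i)) = snd (hE H ! \<pi> i)"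
      using q \<sigma>G(2) \<sigma>H(2) R by (auto simp: list_all2_conv_all_nth)
  next
    have "vs \<noteq> []" using G unfolding is_path_def by auto
    then show "map f (hext G) = hext H"
      using f(2) G H unfolding is_path_def by (auto simp: hd_map last_map)
  qed
qed

lemma giso_is_path:
  assumes g: "giso R G H" and G: "is_path G ys vs"
  shows "\<exists>zs ws. is_path H zs ws \<and> list_all2 R ys zs"
proof -
  obtain f \<pi> where f: "bij_betw f (hV G) (hV H)"
    and p: "bij_betw \<pi> {..<length (hE G)} {..<length (hE H)}"
    and e: "\<forall>i<length (hE G). R (fst (hE G ! i)) (fst (hE H ! \<pi> i)) \<and>
                              map f (snd (hE G ! i)) = snd (hE H ! \<pi> i)"
    and x: "map f (hext G) = hext H"
    using g unfolding giso_def by blast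
  obtain \<sigma> where s: "bij_betw \<sigma> {..<length ys} {..<length (hE G)}"
    and edge: "\<And>q. q < length ys \<Longrightarrow> hE G ! \<sigma> q = (ys ! q, [vs ! q, vs ! Suc q])"
    using is_path_edge_bij[OF G] by blast
  define zs where "zs = map (\<lambda>q. fst (hE H ! \<pi> (\<sigma> q))) [0..<length ys]"
  have lv: "length vs = Suc (length ys)" and dv: "distinct vs" "hV G = set vs"
    using G unfolding is_path_def by auto
  have sq: "\<sigma> q < length (hE G)" if "q < length ys" for q
    using s that unfolding bij_betw_def by auto
  have pe: "path_edges (map f vs) zs = map (\<lambda>q. hE H ! (\<pi> \<circ> \<sigma>) q) [0..<length ys]"
  proof (rule nth_equalityI)
    fix q assume "q < length (path_edges (map f vs) zs)"
    then have q: "q < length ys" by (simp add: zs_def)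
    have "snd (hE H ! \<pi> (\<sigma> q)) = map f [vs ! q, vs ! Suc q]"
      using e sq[OF q] edge[OF q] by (metis snd_conv)
    then show "path_edges (map f vs) zs ! q = map (\<lambda>q. hE H ! (\<pi> \<circ> \<sigma>) q) [0..<length ys] ! q"
      using q lv by (simp add: nth_path_edges zs_def prod_eq_iff)
  qed (simp add: zs_def)
  have "bij_betw (\<pi> \<circ> \<sigma>) {..<length ys} {..<length (hE H)}"
    using s p by (auto intro: bij_betw_trans)
  then have "mset (hE H) = mset (path_edges (map f vs) zs)"
    unfolding pe by (rule mset_map_nth_bij[symmetric])
  moreover have "distinct (map f vs)" "hV H = set (map f vs)"
    using f dv unfolding bij_betw_def by (simp_all add: distinct_map)
  moreover have "hext H = [hd (map f vs), last (map f vs)]"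
    using x G lv unfolding is_path_def by (cases vs) (auto simp: last_map)
  moreover have "list_all2 R ys zs"
  proof -
    have "R (ys ! q) (zs ! q)" if q: "q < length ys" for q
      using e sq[OF q] edge[OF q] q by (force simp: zs_def)
    then show ?thesis by (simp add: list_all2_conv_all_nth zs_def)
  qed
  ultimately have "is_path H zs (map f vs) \<and> list_all2 R ys zs"
    using lv by (simp add: is_path_def zs_def)
  then show ?thesis by blast
qed

lemma giso_is_path_labels:
  "giso R G H \<Longrightarrow> is_path G ys vs \<Longrightarrow> is_path H zs ws \<Longrightarrow> list_all2 R ys zs"
  using giso_is_path is_path_unique by metis

lemma giso_is_path_inv:
  assumes "giso R G H" "is_path H zs ws"
    and "\<forall>e\<in>set (hE G). set (snd e) \<subseteq> hV G" "set (hext G) \<subseteq> hV G"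
  shows "\<exists>ys vs. is_path G ys vs \<and> list_all2 R ys zs"
proof -
  obtain ys vs where "is_path G ys vs" "list_all2 (\<lambda>b a. a \<in> fst ` set (hE G) \<and> R a b) zs ys"
    using giso_is_path[OF giso_sym[OF assms(1,3,4)] assms(2)] by blast
  then show ?thesis by (auto simp: list_all2_conv_all_nth)
qed

section \<open>Equality of types and the translation\<close>

lemma teq_refl: "teq T T"
proof (induction T)
  case (HPr a n)
  show ?case by (rule teq_pr)
next
  case (HDiv N D)
  have "giso (rel_option teq) D D"
  proof (rule giso_refl)
    fix e assume "e \<in> set (hE D)"
    then show "rel_option teq (fst e) (fst e)"
      using HDiv(2) hg.set_sel by (cases "fst e") (fastforce intro: fsts.intros)+
  qed
  then show ?case using HDiv(1) by (rule teq_div[rotated])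
next
  case (HTimes M)
  have "giso teq M M"
    by (rule giso_refl) (use HTimes hg.set_sel in \<open>fastforce intro: fsts.intros\<close>)
  then show ?case by (rule teq_times)
qed

lemma teq_trans: "teq x y \<Longrightarrow> teq y z \<Longrightarrow> teq x z"
proof (induct x y arbitrary: z rule: teq.induct)
  case (teq_pr a n)
  then show ?case by simp
next
  case (teq_div N N' D D')
  from teq_div(4) obtain N'' D'' where z: "z = HDiv N'' D''" "teq N' N''"
    "giso (rel_option teq) D' D''" by (cases rule: teq.cases) auto
  have "giso (rel_option (\<lambda>x1 x2. teq x1 x2 \<and> (\<forall>z. teq x2 z \<longrightarrow> teq x1 z)) OO rel_option teq) D D''"
    using giso_trans teq_div(3) z(3) by blast
  then have "giso (rel_option teq) D D''"
    by (rule giso_mono[rule_format, rotated]) (auto simp: option.rel_sel elim!: option.rel_cases)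
  then show ?case using z teq_div by (auto intro: teq.teq_div)
next
  case (teq_times M M')
  from teq_times(2) obtain M'' where z: "z = HTimes M''" "giso teq M' M''"
    by (cases rule: teq.cases) auto
  have "giso ((\<lambda>x1 x2. teq x1 x2 \<and> (\<forall>z. teq x2 z \<longrightarrow> teq x1 z)) OO teq) M M''"
    using giso_trans teq_times(1) z(2) by blast
  then have "giso teq M M''"
    by (rule giso_mono[rule_format, rotated]) auto
  then show ?case using z by (auto intro: teq.teq_times)
qed

lemma teq_sym: "teq x y \<Longrightarrow> wf_tp x \<Longrightarrow> teq y x"
proof (induct x y rule: teq.induct)
  case (teq_pr a n)
  then show ?case by (simp add: teq.teq_pr)
next
  case (teq_div N N' D D')
  from teq_div(4) have w: "wf_tp N" "wf_hg ok_opt D"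
    "\<forall>x\<in>set (hE D). \<forall>T. fst x = Some T \<longrightarrow> wf_tp T"
    by (auto elim: wf_tp.cases)
  have "giso (\<lambda>b a. a \<in> fst ` set (hE D) \<and>
      rel_option (\<lambda>x1 x2. teq x1 x2 \<and> (wf_tp x1 \<longrightarrow> teq x2 x1)) a b) D' D"
    using teq_div(3) w(2) by (intro giso_sym) (auto simp: wf_hg_def)
  then have "giso (rel_option teq) D' D"
    by (rule giso_mono[rule_format, rotated])
       (use w(3) in \<open>auto simp: option.rel_sel elim!: option.rel_cases\<close>)
  then show ?case using teq_div w by (auto intro: teq.teq_div)
next
  case (teq_times M M')
  from teq_times(2) have w: "wf_hg ok_tp M" "\<forall>x\<in>set (hE M). wf_tp (fst x)"
    by (auto elim: wf_tp.cases)
  have "giso (\<lambda>b a. a \<in> fst ` set (hE M) \<and> teq a b \<and> (wf_tp a \<longrightarrow> teq b a)) M' M"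
    using teq_times(1) w(1) by (intro giso_sym) (auto simp: wf_hg_def)
  then have "giso teq M' M"
    by (rule giso_mono[rule_format, rotated]) (use w(2) in auto)
  then show ?case by (auto intro: teq.teq_times)
qed

lemma string_graph_two: "string_graph [a, b] = HG {0..2} [(a, [0, 1]), (b, [1, 2])] [0, 2]"
  by (simp add: string_graph_def upt_rec numeral_2_eq_2)

lemma string_graph_single: "string_graph [a] = handle a 2"
  by (simp add: string_graph_def handle_def upt_rec numeral_2_eq_2 atLeastLessThanSuc_atLeastAtMost)

lemma tp_ar_tr [simp]: "tp_ar (tr A) = 2"
  by (cases A) (auto simp: string_graph_two)

lemma wf_tp_tr: "wf_tp (tr A)"
  by (induction A)
     (auto intro!: wf_pr wf_div wf_times simp: string_graph_two wf_hg_def ok_opt_def ok_tp_def)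

text \<open>The two divisions are treated uniformly: \<open>ldiv True A B\<close> is \<open>A/B\<close> and
  \<open>ldiv False A B\<close> is \<open>B\A\<close>; the flag tells on which side of the argument the
  \<open>$\<close>-edge of the translated denominator lies.\<close>
definition arrange :: "bool \<Rightarrow> 'a list \<Rightarrow> 'a list \<Rightarrow> 'a list" where
  "arrange left xs ys = (if left then xs @ ys else ys @ xs)"

definition ldiv :: "bool \<Rightarrow> ltp \<Rightarrow> ltp \<Rightarrow> ltp" where
  "ldiv left A B = (if left then LSl A B else LBs B A)"

lemma tr_ldiv: "tr (ldiv left A B) = HDiv (tr A) (string_graph (arrange left [None] [Some (tr B)]))"
  by (simp add: ldiv_def arrange_def)

lemma map_arrange: "map f (arrange left xs ys) = arrange left (map f xs) (map f ys)"
  by (simp add: arrange_def)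

lemma L_div_r: "\<Psi> \<noteq> [] \<Longrightarrow> L_der (arrange left \<Psi> [B]) A \<Longrightarrow> L_der \<Psi> (ldiv left A B)"
  by (auto simp: ldiv_def arrange_def intro: L_sl_r L_bs_r)

lemma L_div_l:
  "\<Psi> \<noteq> [] \<Longrightarrow> L_der \<Psi> B \<Longrightarrow> L_der (\<Gamma> @ [A] @ \<Delta>) C \<Longrightarrow>
   L_der (\<Gamma> @ arrange left [ldiv left A B] \<Psi> @ \<Delta>) C"
  using L_sl_l[of \<Psi> B \<Gamma> A \<Delta> C] L_bs_l[of \<Psi> B \<Gamma> A \<Delta> C] by (simp add: ldiv_def arrange_def)

lemma L_der_nonempty: "L_der \<Gamma> C \<Longrightarrow> \<Gamma> \<noteq> []"
  by (induction rule: L_der.induct) auto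

lemma teq_tr_cases:
  assumes "teq X (tr A)"
  obtains (pr) p where "A = LPr p" "X = HPr p 2"
  | (div) left A1 B1 N D where "A = ldiv left A1 B1" "X = HDiv N D" "teq N (tr A1)"
      "giso (rel_option teq) D (string_graph (arrange left [None] [Some (tr B1)]))"
  | (pd) A1 B1 M where "A = LPd A1 B1" "X = HTimes M" "giso teq M (string_graph [tr A1, tr B1])"
proof (cases A)
  case (LSl A1 B1)
  then show ?thesis using assms div[of True A1 B1] by (auto simp: ldiv_def arrange_def elim: teq.cases)
next
  case (LBs B1 A1)
  then show ?thesis using assms div[of False A1 B1] by (auto simp: ldiv_def arrange_def elim: teq.cases)
qed (use assms that in \<open>auto elim: teq.cases\<close>)

lemma list_all2_arrange_dollar:
  "list_all2 (rel_option R) (arrange l [None] [Some x]) (arrange l' [None] [Some y]) \<longleftrightarrow>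
   l = l' \<and> R x y"
  by (cases l; cases l') (auto simp: arrange_def)

lemma teq_tr_ldiv_eq:
  assumes "teq (tr (ldiv l A1 A2)) (tr B)"
    and IH: "\<And>X. teq (tr A1) (tr X) \<Longrightarrow> A1 = X" "\<And>X. teq (tr A2) (tr X) \<Longrightarrow> A2 = X"
  shows "B = ldiv l A1 A2"
  using assms(1)
proof (cases rule: teq_tr_cases)
  case (div l' B1 B2 N D)
  then have "N = tr A1" "D = string_graph (arrange l [None] [Some (tr A2)])"
    by (simp_all add: tr_ldiv)
  with div have "teq (tr A1) (tr B1)" "giso (rel_option teq)
      (string_graph (arrange l [None] [Some (tr A2)])) (string_graph (arrange l' [None] [Some (tr B2)]))"
    by simp_all
  then have "A1 = B1" "l = l'" "teq (tr A2) (tr B2)"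
    using IH(1) giso_is_path_labels is_path_string_graph list_all2_arrange_dollar by metis+
  then show ?thesis using div(1) IH(2)[of B2] by simp
qed (auto simp: tr_ldiv)

lemma tr_inj: "teq (tr A) (tr B) \<Longrightarrow> A = B"
proof (induction A arbitrary: B)
  case (LPr p)
  then show ?case by (cases B) (auto elim: teq.cases)
next
  case (LSl A1 A2)
  then show ?case using teq_tr_ldiv_eq[of True A1 A2] by (simp add: ldiv_def)
next
  case (LBs A2 A1)
  then show ?case using teq_tr_ldiv_eq[of False A1 A2] by (simp add: ldiv_def)
next
  case (LPd A1 A2)
  from LPd.prems show ?case
  proof (cases rule: teq_tr_cases)
    case (pd B1 B2 M)
    then have "list_all2 teq [tr A1, tr A2] [tr B1, tr B2]"
      by (intro giso_is_path_labels[OF _ is_path_string_graph is_path_string_graph]) simp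
    then show ?thesis using pd LPd.IH by simp
  qed (auto simp: tr_ldiv)
qed

lemma teq_tr_unique: "teq x (tr A) \<Longrightarrow> teq x (tr B) \<Longrightarrow> wf_tp x \<Longrightarrow> A = B"
  using teq_sym teq_trans tr_inj by blast

lemma HL_der_wf_seq: "HL_der G T \<Longrightarrow> wf_seq G T"
  by (erule HL_der.cases) (simp_all add: wf_seq_def wf_hg_def handle_def ok_tp_def wf_pr)

lemma wf_seq_is_path:
  assumes "is_path G (map tr \<Gamma>) vs" "\<Gamma> \<noteq> []"
  shows "wf_seq G (tr C)"
proof -
  have "\<forall>e\<in>set (hE G). \<exists>A. fst e = tr A"
    using is_path_labels[OF assms(1)] by (metis image_eqI imageE list.set_map)
  then have "\<forall>e\<in>set (hE G). wf_tp (fst e) \<and> tp_ar (fst e) = 2" using wf_tp_tr by fastforce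
  then show ?thesis using is_path_wf[OF assms(1)] assms(2) wf_tp_tr
    unfolding wf_seq_def wf_hg_def ok_tp_def by simp
qed

section \<open>Hyperedge replacement in string-shaped graphs\<close>

text \<open>\<open>repl G i H\<close> renames an internal node \<open>v\<close> of \<open>H\<close> to \<open>fresh_base G + v\<close>.\<close>
definition fresh_base :: "'a hg \<Rightarrow> nat" where
  "fresh_base G = Suc (Max (insert 0 (hV G)))"

definition repl_node_map :: "'a hg \<Rightarrow> nat \<Rightarrow> 'a hg \<Rightarrow> nat \<Rightarrow> nat" where
  "repl_node_map G i H v =
     (case map_of (zip (hext H) (snd (hE G ! i))) v of Some u \<Rightarrow> u | None \<Rightarrow> fresh_base G + v)"

abbreviation map_att :: "(nat \<Rightarrow> nat) \<Rightarrow> ('a \<times> nat list) list \<Rightarrow> ('a \<times> nat list) list" where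
  "map_att f \<equiv> map (\<lambda>(l, a). (l, map f a))"

lemma image_fst_map_att [simp]: "fst ` (\<lambda>(l, a). (l, map f a)) ` A = fst ` A"
  by (simp add: image_image split_def)

lemma hV_repl: "hV (repl G i H) = hV G \<union> (+) (fresh_base G) ` (hV H - set (hext H))"
  and hE_repl: "hE (repl G i H) =
    take i (hE G) @ drop (Suc i) (hE G) @ map_att (repl_node_map G i H) (hE H)"
  and hext_repl [simp]: "hext (repl G i H) = hext G"
  unfolding repl_def Let_def repl_node_map_def[abs_def] fresh_base_def by simp_all

lemma fresh_base_gt: "finite (hV G) \<Longrightarrow> v \<in> hV G \<Longrightarrow> v < fresh_base G"
  by (simp add: fresh_base_def le_imp_less_Suc)

lemma repl_node_map_ext:
  assumes "hext H = [e0, e1]" "e0 \<noteq> e1" "snd (hE G ! i) = [c0, c1]"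
  shows "repl_node_map G i H v = (if v = e0 then c0 else if v = e1 then c1 else fresh_base G + v)"
  using assms by (simp add: repl_node_map_def)

lemma repl_node_map_inj_image:
  assumes "hext H = [e0, e1]" "e0 \<noteq> e1" "snd (hE G ! i) = [c0, c1]" "c0 \<noteq> c1"
    "finite (hV G)" "c0 \<in> hV G" "c1 \<in> hV G" "{e0, e1} \<subseteq> A"
  shows "inj_on (repl_node_map G i H) A"
    "repl_node_map G i H ` A = {c0, c1} \<union> (+) (fresh_base G) ` (A - {e0, e1})"
proof -
  have "c0 < fresh_base G" "c1 < fresh_base G" using fresh_base_gt assms(5-7) by auto
  then show "inj_on (repl_node_map G i H) A"
    using assms(4) by (auto intro!: inj_onI simp: repl_node_map_ext[OF assms(1-3)] split: if_splits)
  show "repl_node_map G i H ` A = {c0, c1} \<union> (+) (fresh_base G) ` (A - {e0, e1})"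
    using assms(2,8) by (auto simp: repl_node_map_ext[OF assms(1-3)] image_iff)
qed

lemma mset_remove_nth: "i < length xs \<Longrightarrow> mset xs = mset (take i xs @ drop (Suc i) xs) + {#xs ! i#}"
  by (subst id_take_nth_drop[of i xs]) auto

lemma nth_mem_remove_nth: "k < length xs \<Longrightarrow> k \<noteq> i \<Longrightarrow> xs ! k \<in> set (take i xs @ drop (Suc i) xs)"
proof (cases "k < i")
  case True
  moreover assume "k < length xs"
  ultimately show ?thesis by (metis in_set_conv_nth length_take min_less_iff_conj nth_take UnI1 set_append)
next
  case False
  moreover assume "k < length xs" "k \<noteq> i"
  ultimately have "drop (Suc i) xs ! (k - Suc i) = xs ! k" "k - Suc i < length (drop (Suc i) xs)" by auto
  then show ?thesis by (metis in_set_conv_nth UnI2 set_append)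
qed

lemma take_drop_two:
  assumes "length xs = 2" "j < 2"
  shows "take j xs @ drop (Suc j) xs = [xs ! (1 - j)]"
proof -
  obtain x y where "xs = [x, y]" using assms(1) by (auto simp: numeral_2_eq_2 length_Suc_conv)
  then show ?thesis using assms(2) by (cases j) auto
qed

lemma labels_repl:
  "fst ` set (hE (repl G i H)) = fst ` set (take i (hE G) @ drop (Suc i) (hE G)) \<union> fst ` set (hE H)"
  by (simp add: hE_repl image_Un image_image split_def Un_assoc)

lemma mset_hE_repl:
  "i < length (hE G) \<Longrightarrow>
   mset (hE (repl G i H)) + {#hE G ! i#} = mset (hE G) + mset (map_att (repl_node_map G i H) (hE H))"
  by (simp add: hE_repl mset_remove_nth[of i "hE G"])

lemma is_path_repl_split:
  assumes G: "is_path G (X1 @ x # X2) (V1 @ a # b # V2)" and lV: "length V1 = length X1"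
    and i: "i < length (hE G)" "hE G ! i = (x, [a, b])"
    and H: "is_path H ys ws" and ne: "ys \<noteq> []"
  shows "is_path (repl G i H) (X1 @ ys @ X2)
     (V1 @ a # map ((+) (fresh_base G)) (butlast (tl ws)) @ b # V2)"
proof -
  define s where "s = fresh_base G"
  define fn where "fn = repl_node_map G i H"
  have lw: "length ws = Suc (length ys)" and dw: "distinct ws" and hw: "hext H = [hd ws, last ws]"
    and VH: "hV H = set ws" and mH: "mset (hE H) = mset (path_edges ws ys)"
    using H unfolding is_path_def by auto
  obtain w0 mid wl where ws: "ws = w0 # mid @ [wl]"
  proof -
    have "tl ws \<noteq> []" using lw ne by (cases ws; cases ys) auto
    then have "ws = hd ws # butlast (tl ws) @ [last (tl ws)]" by (cases ws) auto
    then show ?thesis using that by blast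
  qed
  have dG: "distinct (V1 @ a # b # V2)" and VG: "hV G = set (V1 @ a # b # V2)"
    and mG: "mset (hE G) = mset (path_edges (V1 @ a # b # V2) (X1 @ x # X2))"
    and xG: "hext G = [hd (V1 @ a # b # V2), last (V1 @ a # b # V2)]"
    and lG: "length (V1 @ a # b # V2) = Suc (length (X1 @ x # X2))"
    using G unfolding is_path_def by auto
  have dw': "w0 \<noteq> wl" "w0 \<notin> set mid" "wl \<notin> set mid" "distinct mid" using dw ws by auto
  define mid' where "mid' = map ((+) s) mid"
  have "map fn ws = a # mid' @ [b]"
    using dw' hw ws i(2) by (auto simp: fn_def repl_node_map_def mid'_def s_def)
  then have "mset (map_att fn (hE H)) = mset (path_edges (a # mid' @ [b]) ys)"
    using mH path_edges_map_nodes[OF lw, of fn] by (metis mset_map)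
  moreover have "length (a # mid') = length ys" using lw ws by (simp add: mid'_def)
  then have "path_edges (V1 @ a # mid' @ b # V2) (X1 @ ys @ X2) =
      path_edges (V1 @ [a]) X1 @ path_edges (a # mid' @ [b]) ys @ path_edges (b # V2) X2"
    using path_edges_append[OF lV, of a "mid' @ b # V2" "ys @ X2"]
      path_edges_append[of "a # mid'" ys b V2 X2] by simp
  moreover have "mset (take i (hE G) @ drop (Suc i) (hE G)) =
      mset (path_edges (V1 @ [a]) X1) + mset (path_edges (b # V2) X2)"
    using mset_remove_nth[OF i(1)] mG i(2) path_edges_append[OF lV, of a "b # V2" "x # X2"]
    by (simp add: path_edges_Cons_Cons)
  ultimately have mE: "mset (hE (repl G i H)) = mset (path_edges (V1 @ a # mid' @ b # V2) (X1 @ ys @ X2))"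
    by (simp add: hE_repl fn_def)
  have "hV H - set (hext H) = set mid" using VH hw ws dw' by auto
  then have vR: "hV (repl G i H) = set (V1 @ a # mid' @ b # V2)"
    using VG by (auto simp: hV_repl s_def mid'_def)
  have "set mid' \<inter> hV G = {}"
    using fresh_base_gt[of G] VG by (fastforce simp: mid'_def s_def)
  then have dR: "distinct (V1 @ a # mid' @ b # V2)"
    using dG VG dw' by (auto simp: mid'_def distinct_map)
  have "length (V1 @ a # mid' @ b # V2) = Suc (length (X1 @ ys @ X2))"
    using lG \<open>length (a # mid') = length ys\<close> by simp
  then show ?thesis
    using mE vR dR xG ws unfolding is_path_def s_def mid'_def by (simp add: hd_append)
qed

lemma is_path_repl:
  assumes G: "is_path G xs us" and k: "k < length xs"
    and i: "i < length (hE G)" "hE G ! i = (xs ! k, [us ! k, us ! Suc k])"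
    and H: "is_path H ys ws" "ys \<noteq> []"
  shows "\<exists>vs. is_path (repl G i H) (take k xs @ ys @ drop (Suc k) xs) vs"
proof -
  have l: "length us = Suc (length xs)" using G unfolding is_path_def by simp
  have "xs = take k xs @ xs ! k # drop (Suc k) xs" using k by (simp add: id_take_nth_drop)
  moreover have "us = take k us @ us ! k # us ! Suc k # drop (Suc (Suc k)) us"
    using k l by (metis Cons_nth_drop_Suc Suc_less_eq append_take_drop_id less_SucI)
  ultimately have "is_path G (take k xs @ xs ! k # drop (Suc k) xs)
      (take k us @ us ! k # us ! Suc k # drop (Suc (Suc k)) us)"
    using G by simp
  then show ?thesis using is_path_repl_split[OF _ _ i H] k l by fastforce
qed

lemma fresh_base_map_hg [simp]: "fresh_base (map_hg g G) = fresh_base G"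
  by (simp add: fresh_base_def hg.map_sel)

lemma map_hg_repl:
  assumes "i < length (hE G)"
  shows "map_hg g (repl G i H) = repl (map_hg g G) i (map_hg g H)"
proof -
  have "repl_node_map (map_hg g G) i (map_hg g H) = repl_node_map G i H"
    using assms by (simp add: fun_eq_iff repl_node_map_def hg.map_sel split: option.split)
  then show ?thesis
    by (intro hg.expand) (simp add: hg.map_sel hV_repl hE_repl take_map drop_map split_def)
qed

lemma map_hg_the_Some: "map_hg the (map_hg Some F) = F"
  by (simp add: hg.map_comp o_def hg.map_ident)

lemma repl_many_two_edges_but:
  assumes "length (hE G) = 2" "j0 < 2"
  shows "repl_many G (\<lambda>j. if j = j0 then None else Some (K j)) = repl G (1 - j0) (K (1 - j0))"
proof -
  have "rev [0..<length (hE G)] = [1, 0]" using assms(1) by (simp add: numeral_2_eq_2)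
  then show ?thesis using assms(2) unfolding repl_many_def by (cases "j0 = 0") auto
qed

lemma repl_many_two_edges:
  assumes "length (hE G) = 2"
  shows "repl_many G (\<lambda>j. Some (K j)) = repl (repl G 1 (K 1)) 0 (K 0)"
proof -
  have "rev [0..<length (hE G)] = [1, 0]" using assms by (simp add: numeral_2_eq_2)
  then show ?thesis unfolding repl_many_def by simp
qed

text \<open>Edges are replaced in decreasing order, so the edges below the current index keep their
  positions; this is the invariant of the induction.\<close>
lemma repl_many_keeps_edge:
  assumes "j < length (hE G)" "f j = None"
  shows "hE G ! j \<in> set (hE (repl_many G f))"
proof -
  define step where "step = (\<lambda>i G'. case f i of None \<Rightarrow> G' | Some H \<Rightarrow> repl G' i H)"
  have "set (drop n (hE G')) \<union> {hE G' ! k |k. k < n \<and> f k = None}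
      \<subseteq> set (hE (fold step (rev [0..<n]) G'))" if "n \<le> length (hE G')" for n G'
    using that
  proof (induction n arbitrary: G')
    case (Suc n)
    define L where "L = hE G'"
    define G1 where "G1 = step n G'"
    have n: "n < length L" using Suc.prems by (simp add: L_def)
    have sub: "set (drop (Suc n) L) \<union> {L ! k |k. k < Suc n \<and> f k = None}
        \<subseteq> set (drop n (hE G1)) \<union> {hE G1 ! k |k. k < n \<and> f k = None} \<and> n \<le> length (hE G1)"
    proof (cases "f n")
      case None
      then have "G1 = G'" by (simp add: G1_def step_def)
      moreover have "L ! n \<in> set (drop n L)" using n by (metis Cons_nth_drop_Suc list.set_intros(1))
      moreover have "set (drop (Suc n) L) \<subseteq> set (drop n L)" by (simp add: set_drop_subset_set_drop)
      ultimately show ?thesis using n by (auto simp: L_def less_Suc_eq)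
    next
      case (Some H)
      then have G1: "hE G1 = take n L @ drop (Suc n) L @ map_att (repl_node_map G' n H) (hE H)"
        by (simp add: G1_def step_def hE_repl L_def)
      have "length (take n L) = n" using n by simp
      then have "drop n (hE G1) = drop (Suc n) L @ map_att (repl_node_map G' n H) (hE H)"
        and nth: "\<And>k. k < n \<Longrightarrow> hE G1 ! k = L ! k"
        unfolding G1 by (simp_all add: nth_append)
      moreover have "{L ! k |k. k < Suc n \<and> f k = None} = {hE G1 ! k |k. k < n \<and> f k = None}"
        using Some nth less_Suc_eq by (metis option.distinct(1))
      moreover have "n \<le> length (hE G1)" using G1 n by simp
      ultimately show ?thesis by auto
    qed
    have "fold step (rev [0..<Suc n]) G' = fold step (rev [0..<n]) G1"
      by (simp add: G1_def)
    then show ?case using subset_trans[OF conjunct1[OF sub] Suc.IH[OF conjunct2[OF sub]]]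
      by (simp add: L_def)
  qed simp
  from this[of "length (hE G)" G] assms show ?thesis
    unfolding repl_many_def step_def[symmetric] by blast
qed

lemma labels_repl_many_two_edges:
  assumes "length (hE M) = 2" "j < 2"
  shows "fst ` set (hE (Hs j)) \<subseteq> fst ` set (hE (repl_many M (\<lambda>j. Some (Hs j))))"
proof -
  have "drop (Suc 0) (hE (repl M 1 (Hs 1))) = map_att (repl_node_map M 1 (Hs 1)) (hE (Hs 1))"
    using assms(1) by (simp add: hE_repl)
  then have "fst ` set (hE (Hs 1)) \<subseteq> fst ` set (hE (repl (repl M 1 (Hs 1)) 0 (Hs 0)))"
    unfolding labels_repl by simp
  moreover have "fst ` set (hE (Hs 0)) \<subseteq> fst ` set (hE (repl (repl M 1 (Hs 1)) 0 (Hs 0)))"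
    unfolding labels_repl by blast
  ultimately show ?thesis using assms by (auto simp: repl_many_two_edges less_2_cases_iff)
qed

lemma is_path_preimage:
  assumes inj: "inj_on fn (hV F)" and img: "fn ` hV F = set vs"
    and edges: "mset (map_att fn (hE F)) = mset (path_edges vs ys)"
    and att: "\<forall>e\<in>set (hE F). set (snd e) \<subseteq> hV F"
    and ext: "hext F = [e0, e1]" "e0 \<in> hV F" "e1 \<in> hV F" "fn e0 = hd vs" "fn e1 = last vs"
    and vs: "distinct vs" "length vs = Suc (length ys)"
  shows "is_path F ys (map (inv_into (hV F) fn) vs)"
proof -
  define h where "h = inv_into (hV F) fn"
  have hf: "map h (map fn a) = a" if "set a \<subseteq> hV F" for a
    using that inj by (induction a) (auto simp: h_def)
  have fh: "map fn (map h vs) = vs"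
    using img by (simp add: h_def map_idI f_inv_into_f)
  have "map_att h (map_att fn E) = E" if "\<forall>e\<in>set E. set (snd e) \<subseteq> hV F" for E
    using that hf by (induction E) (auto simp del: map_map)
  then have inv: "map_att h (map_att fn (hE F)) = hE F" using att by blast
  have "mset (hE F) = image_mset (\<lambda>(l, a). (l, map h a)) (mset (map_att fn (hE F)))"
    by (simp only: mset_map[symmetric] inv)
  also have "\<dots> = image_mset (\<lambda>(l, a). (l, map h a)) (mset (path_edges vs ys))"
    by (simp only: edges)
  also have "\<dots> = mset (map_att h (path_edges vs ys))"
    by (simp only: mset_map)
  also have "map_att h (path_edges vs ys) = path_edges (map h vs) ys"
    using path_edges_map_nodes[OF vs(2)] by simp
  finally have "mset (hE F) = mset (path_edges (map h vs) ys)" .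
  moreover have "set (map h vs) = hV F"
    using img inj by (metis h_def inv_into_image_cancel list.set_map order_refl)
  moreover have "distinct (map h vs)" using fh vs(1) by (metis distinct_map)
  moreover have "vs \<noteq> []" using vs(2) by auto
  then have "hext F = [hd (map h vs), last (map h vs)]"
    using ext inj by (simp add: h_def hd_map last_map) (metis inv_into_f_f)
  ultimately show ?thesis using vs(2) unfolding is_path_def h_def by simp
qed

lemma path_edges_remove_end_edge:
  assumes "distinct vs" "length vs = Suc (length ys)" "hd vs = g0" "last vs = g2"
    and "(b, if left then [g1, g2] else [g0, g1]) \<in> set (path_edges vs ys)"
  obtains ys' vs' where "ys = arrange left ys' [b]" "vs = arrange left vs' [if left then g2 else g0]"
    "hd vs' = (if left then g0 else g1)" "last vs' = (if left then g1 else g2)"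
    "mset (path_edges vs ys) = add_mset (b, if left then [g1, g2] else [g0, g1]) (mset (path_edges vs' ys'))"
proof (cases left)
  case True
  then have "(b, [g1, g2]) \<in> set (path_edges vs ys)" using assms(5) by simp
  then obtain ys' vs0 where "ys = ys' @ [b]" "vs = vs0 @ [g1, g2]"
    "path_edges vs ys = path_edges (vs0 @ [g1]) ys' @ [(b, [g1, g2])]"
    by (rule path_edges_last_edge[OF assms(1,2) _ assms(4)])
  moreover from this have "hd (vs0 @ [g1]) = g0" using assms(3) by (cases vs0) auto
  ultimately show ?thesis using that[of ys' "vs0 @ [g1]"] True by (simp add: arrange_def)
next
  case False
  then have "(b, [g0, g1]) \<in> set (path_edges vs ys)" using assms(5) by simp
  then obtain ys' vs0 where "ys = b # ys'" "vs = g0 # g1 # vs0"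
    "path_edges vs ys = (b, [g0, g1]) # path_edges (g1 # vs0) ys'"
    by (rule path_edges_first_edge[OF assms(1,2) _ assms(3)])
  moreover from this have "last (g1 # vs0) = g2" using assms(4) by (cases vs0 rule: rev_cases) auto
  ultimately show ?thesis using that[of ys' "g1 # vs0"] False by (simp add: arrange_def)
qed

lemma is_path_repl_frame_inv:
  assumes G: "is_path G (arrange left [u] [b]) [g0, g1, g2]"
    and i: "i < length (hE G)" "hE G ! i = (u, if left then [g0, g1] else [g1, g2])"
    and F: "hext F = [e0, e1]" "e0 \<noteq> e1" "{e0, e1} \<subseteq> hV F" "\<forall>e\<in>set (hE F). set (snd e) \<subseteq> hV F"
    and R: "is_path (repl G i F) ys vs"
  shows "\<exists>ys'. ys = arrange left ys' [b] \<and> ys' \<noteq> [] \<and> (\<exists>ws. is_path F ys' ws)"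
proof -
  define c0 c1 endp where "c0 = (if left then g0 else g1)" and "c1 = (if left then g1 else g2)"
    and "endp = (if left then g2 else g0)"
  define other where "other = (b, if left then [g1, g2] else [g0, g1])"
  define fn where "fn = repl_node_map G i F"
  have G2: "mset (hE G) = {#(u, [c0, c1]), other#}" "hV G = {g0, g1, g2}"
    "hext G = [g0, g2]" "distinct [g0, g1, g2]"
    using is_path_two_edges[of G] G
    by (cases left; simp add: arrange_def c0_def c1_def other_def add_mset_commute)+
  have ei: "hE G ! i = (u, [c0, c1])" using i(2) by (simp add: c0_def c1_def)
  then have att: "snd (hE G ! i) = [c0, c1]" by simp
  have dv: "distinct vs" and lv: "length vs = Suc (length ys)" and VR: "hV (repl G i F) = set vs"
    and ends: "hd vs = g0" "last vs = g2"
    and mR: "mset (hE (repl G i F)) = mset (path_edges vs ys)"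
    using R G2(3) unfolding is_path_def by auto
  have mF: "mset (path_edges vs ys) = add_mset other (mset (map_att fn (hE F)))"
    using mset_hE_repl[OF i(1), of F] G2(1) ei mR by (simp add: fn_def)
  then have other: "other \<in> set (path_edges vs ys)" by (metis set_mset_mset union_single_eq_member)
  \<comment> \<open>The kept edge of \<open>G\<close> is an end edge of the path; removing it leaves the image of \<open>F\<close>.\<close>
  obtain ys' vs' where ys: "ys = arrange left ys' [b]" and vs: "vs = arrange left vs' [endp]"
    "hd vs' = c0" "last vs' = c1" and pe: "mset (path_edges vs ys) = add_mset other (mset (path_edges vs' ys'))"
    using path_edges_remove_end_edge[OF dv lv ends other[unfolded other_def]]
    unfolding c0_def c1_def endp_def other_def by blast
  have vs': "set vs = insert endp (set vs')" "endp \<notin> set vs'" "distinct vs'"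
    "length vs' = Suc (length ys')"
    using vs(1) ys dv lv by (auto simp: arrange_def split: if_splits)
  have "c0 \<noteq> c1" "c0 \<in> hV G" "c1 \<in> hV G" "endp \<in> hV G" "finite (hV G)"
    using G2(2,4) by (auto simp: c0_def c1_def endp_def)
  note fn = repl_node_map_inj_image[OF F(1,2) att this(1,5,2,3) F(3), folded fn_def]
  have "set vs' = set vs - {endp}" using vs'(1,2) by auto
  also have "\<dots> = {c0, c1} \<union> (+) (fresh_base G) ` (hV F - {e0, e1})"
    using VR G2(2,4) fresh_base_gt[OF \<open>finite (hV G)\<close> \<open>endp \<in> hV G\<close>]
    by (auto simp: hV_repl F(1) c0_def c1_def endp_def)
  finally have img: "fn ` hV F = set vs'" using fn(2) by simp
  have "ys' \<noteq> []"
  proof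
    assume "ys' = []"
    then obtain v where "vs' = [v]" using vs'(4) by (cases vs') auto
    then show False using vs(2,3) \<open>c0 \<noteq> c1\<close> by simp
  qed
  moreover have "mset (map_att fn (hE F)) = mset (path_edges vs' ys')" using mF pe by simp
  then have "is_path F ys' (map (inv_into (hV F) fn) vs')"
    using is_path_preimage[OF fn(1) img _ F(4,1)] F(3) vs'(3,4) vs(2,3) repl_node_map_ext[OF F(1,2) att] F(2)
    by (simp add: fn_def)
  ultimately show ?thesis using ys by blast
qed

lemma is_path_repl_path_inv:
  assumes R: "is_path (repl G i F) ys vs" and F: "is_path F [a, b] [w0, w1, w2]"
    and i: "i < length (hE G)" "snd (hE G ! i) = [x, y]" "{x, y} \<subseteq> hV G" and fin: "finite (hV G)"
  shows "\<exists>Y1 Y2 vs'. ys = Y1 @ a # b # Y2 \<and> is_path G (Y1 @ fst (hE G ! i) # Y2) vs'"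
proof -
  define m where "m = fresh_base G + w1"
  note F2 = is_path_two_edges[OF F]
  have mG: "m \<notin> hV G" using fresh_base_gt[OF fin] by (auto simp: m_def)
  have "repl_node_map G i F w0 = x" "repl_node_map G i F w1 = m" "repl_node_map G i F w2 = y"
    using repl_node_map_ext[OF F2(3) _ i(2)] F2(4) by (auto simp: m_def)
  then have "mset (map_att (repl_node_map G i F) (hE F)) = {#(a, [x, m]), (b, [m, y])#}"
    using F2(1) by simp
  then have mR: "mset (path_edges vs ys) + {#hE G ! i#} = mset (hE G) + {#(a, [x, m]), (b, [m, y])#}"
    using mset_hE_repl[OF i(1), of F] R unfolding is_path_def by simp
  have dv: "distinct vs" and lv: "length vs = Suc (length ys)" and VR: "hV (repl G i F) = set vs"
    and xR: "hext G = [hd vs, last vs]"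
    using R unfolding is_path_def by auto
  \<comment> \<open>The two edges of \<open>F\<close> become consecutive edges of the path, joined at the fresh node \<open>m\<close>.\<close>
  have "(a, [x, m]) \<noteq> hE G ! i" "(b, [m, y]) \<noteq> hE G ! i"
    using i(2,3) mG by (metis insert_subset list.inject snd_conv)+
  moreover have "(a, [x, m]) \<in># mset (path_edges vs ys) + {#hE G ! i#}"
    "(b, [m, y]) \<in># mset (path_edges vs ys) + {#hE G ! i#}" unfolding mR by simp_all
  ultimately have "(a, [x, m]) \<in> set (path_edges vs ys)" "(b, [m, y]) \<in> set (path_edges vs ys)"
    by simp_all
  then obtain Y1 Y2 V1 V2 where ys: "ys = Y1 @ a # b # Y2" and vs: "vs = V1 @ x # m # y # V2"
    and lV: "length V1 = length Y1"
    and "path_edges vs ys = path_edges (V1 @ [x]) Y1 @ (a, [x, m]) # (b, [m, y]) # path_edges (y # V2) Y2"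
    by (rule path_edges_consecutive[OF dv lv])
  moreover have "path_edges (V1 @ x # y # V2) (Y1 @ fst (hE G ! i) # Y2)
      = path_edges (V1 @ [x]) Y1 @ (fst (hE G ! i), [x, y]) # path_edges (y # V2) Y2"
    using path_edges_append[OF lV, of x "y # V2" "fst (hE G ! i) # Y2"] by (simp add: path_edges_Cons_Cons)
  moreover have "hE G ! i = (fst (hE G ! i), [x, y])" using i(2) by (metis prod.collapse)
  ultimately have "mset (hE G) = mset (path_edges (V1 @ x # y # V2) (Y1 @ fst (hE G ! i) # Y2))"
    using mR by (simp add: add_mset_commute)
  moreover have "hV G = set (V1 @ x # y # V2)"
  proof -
    have "hV F - set (hext F) = {w1}" using F2 by auto
    then have "set vs = insert m (hV G)" using VR by (simp add: hV_repl m_def)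
    then show ?thesis using mG dv vs by auto
  qed
  moreover have "distinct (V1 @ x # y # V2)" using dv vs by auto
  moreover have "hext G = [hd (V1 @ x # y # V2), last (V1 @ x # y # V2)]"
    using xR vs by (simp add: hd_append)
  moreover have "length (V1 @ x # y # V2) = Suc (length (Y1 @ fst (hE G ! i) # Y2))"
    using lv ys vs by simp
  ultimately show ?thesis using ys unfolding is_path_def by blast
qed

lemma is_path_frame_edges:
  assumes D: "is_path D (arrange left [u] [b]) [g0, g1, g2]" and "u \<noteq> b"
    and j: "j < length (hE D)" "fst (hE D ! j) = u"
  shows "length (hE D) = 2" "hE D ! j = (u, if left then [g0, g1] else [g1, g2])"
    "hE D ! (1 - j) = (b, if left then [g1, g2] else [g0, g1])"
proof -
  have j_unique: "j = j'" if "j' < 2" "length (hE D) = 2" "fst (hE D ! (1 - j')) \<noteq> u" for j'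
    using that j by (metis One_nat_def diff_Suc_1 diff_zero less_2_cases)
  have "length (hE D) = 2 \<and> hE D ! j = (u, if left then [g0, g1] else [g1, g2]) \<and>
      hE D ! (1 - j) = (b, if left then [g1, g2] else [g0, g1])"
  proof (cases left)
    case True
    then have "is_path D [u, b] [g0, g1, g2]" using D by (simp add: arrange_def)
    then obtain j' where "j' < 2" "length (hE D) = 2" "hE D ! j' = (u, [g0, g1])"
      "hE D ! (1 - j') = (b, [g1, g2])" by (rule is_path_two_edges_nth)
    with j_unique[of j'] \<open>u \<noteq> b\<close> True show ?thesis by simp
  next
    case False
    then have "is_path D [b, u] [g0, g1, g2]" using D by (simp add: arrange_def)
    then obtain j' where j': "j' < 2" "length (hE D) = 2" "hE D ! j' = (b, [g0, g1])"
      "hE D ! (1 - j') = (u, [g1, g2])" by (rule is_path_two_edges_nth)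
    then have "1 - j' < 2" "fst (hE D ! (1 - (1 - j'))) \<noteq> u" using \<open>u \<noteq> b\<close> by auto
    with j' j_unique[of "1 - j'"] False show ?thesis by auto
  qed
  then show "length (hE D) = 2" "hE D ! j = (u, if left then [g0, g1] else [g1, g2])"
    "hE D ! (1 - j) = (b, if left then [g1, g2] else [g0, g1])" by simp_all
qed

definition instantiate_div :: "htp \<Rightarrow> htp option hg \<Rightarrow> nat \<Rightarrow> (nat \<Rightarrow> htp hg) \<Rightarrow> htp hg" where
  "instantiate_div N D j0 Hs = map_hg the (repl_many
     (HG (hV D) ((hE D)[j0 := (Some (HDiv N D), snd (hE D ! j0))]) (hext D))
     (\<lambda>j. if j = j0 then None else Some (map_hg Some (Hs j))))"

lemma is_path_instantiate_div:
  assumes D: "is_path D (arrange left [None] [Some b]) [g0, g1, g2]"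
    and j0: "j0 < length (hE D)" "fst (hE D ! j0) = None"
    and H: "is_path (Hs (1 - j0)) ys ws" "ys \<noteq> []"
  shows "\<exists>vs. is_path (instantiate_div N D j0 Hs) (arrange left [HDiv N D] ys) vs"
proof -
  define D' where "D' = HG (hV D) ((hE D)[j0 := (Some (HDiv N D), snd (hE D ! j0))]) (hext D)"
  define p where "p = (if left then 0 else 1 :: nat)"
  note E = is_path_frame_edges[OF D _ j0]
  have "is_path D' ((arrange left [None] [Some b])[p := Some (HDiv N D)]) [g0, g1, g2]"
    unfolding D'_def using E by (intro is_path_relabel[OF D j0(1)]) (auto simp: p_def arrange_def)
  then have D': "is_path D' (arrange left [Some (HDiv N D)] [Some b]) [g0, g1, g2]"
    by (cases left) (simp_all add: p_def arrange_def)
  have "length (hE D') = 2" "j0 < 2" "1 - j0 \<noteq> j0" using E j0 by (auto simp: D'_def)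
  then have "instantiate_div N D j0 Hs = map_hg the (repl D' (1 - j0) (map_hg Some (Hs (1 - j0))))"
    unfolding instantiate_div_def D'_def[symmetric] by (simp add: repl_many_two_edges_but)
  moreover have "1 - j0 < length (hE D')"
    "hE D' ! (1 - j0) = (arrange left [Some (HDiv N D)] [Some b] ! (1 - p),
        [[g0, g1, g2] ! (1 - p), [g0, g1, g2] ! Suc (1 - p)])"
    using E j0 \<open>1 - j0 \<noteq> j0\<close> by (auto simp: D'_def p_def arrange_def)
  moreover have "1 - p < length (arrange left [Some (HDiv N D)] [Some b])" by (simp add: p_def arrange_def)
  ultimately obtain vs where "is_path (repl D' (1 - j0) (map_hg Some (Hs (1 - j0))))
      (take (1 - p) (arrange left [Some (HDiv N D)] [Some b]) @ map Some ys @
       drop (Suc (1 - p)) (arrange left [Some (HDiv N D)] [Some b])) vs"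
    using is_path_repl[OF D' _ _ _ is_path_map_hg[OF H(1)] ] H(2) by blast
  then have "is_path (repl D' (1 - j0) (map_hg Some (Hs (1 - j0)))) (map Some (arrange left [HDiv N D] ys)) vs"
    by (cases left) (simp_all add: p_def arrange_def)
  from is_path_map_hg[OF this, of the] show ?thesis
    using \<open>instantiate_div N D j0 Hs = _\<close> by (auto simp: o_def)
qed

lemma HDiv_mem_labels_instantiate_div:
  assumes "j0 < length (hE D)"
  shows "HDiv N D \<in> fst ` set (hE (instantiate_div N D j0 Hs))"
proof -
  let ?D' = "HG (hV D) ((hE D)[j0 := (Some (HDiv N D), snd (hE D ! j0))]) (hext D)"
  let ?f = "\<lambda>j. if j = j0 then None else Some (map_hg Some (Hs j))"
  have "hE ?D' ! j0 \<in> set (hE (repl_many ?D' ?f))"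
    using assms by (intro repl_many_keeps_edge) simp_all
  then have "(Some (HDiv N D), snd (hE D ! j0)) \<in> set (hE (repl_many ?D' ?f))"
    using assms by simp
  then show ?thesis
    unfolding instantiate_div_def hg.map_sel by (force intro: rev_image_eqI)
qed

lemma labels_instantiate_div:
  assumes "length (hE D) = 2" "j0 < 2"
  shows "fst ` set (hE (Hs (1 - j0))) \<subseteq> fst ` set (hE (instantiate_div N D j0 Hs))"
proof -
  let ?D' = "HG (hV D) ((hE D)[j0 := (Some (HDiv N D), snd (hE D ! j0))]) (hext D)"
  have "instantiate_div N D j0 Hs = map_hg the (repl ?D' (1 - j0) (map_hg Some (Hs (1 - j0))))"
    unfolding instantiate_div_def using assms by (simp add: repl_many_two_edges_but)
  moreover have "fst ` set (hE (map_hg Some (Hs (1 - j0)))) \<subseteq> fst ` set (hE (repl ?D' (1 - j0) (map_hg Some (Hs (1 - j0)))))"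
    unfolding labels_repl by blast
  ultimately show ?thesis by (force simp: hg.map_sel)
qed

lemma is_path_repl_dollar:
  assumes D: "is_path D (arrange left [None] [Some b]) [g0, g1, g2]"
    and j0: "j0 < length (hE D)" "fst (hE D ! j0) = None"
    and F: "is_path F ys ws" "ys \<noteq> []"
  shows "\<exists>vs. is_path (map_hg the (repl D j0 (map_hg Some F))) (arrange left ys [b]) vs"
proof -
  define p where "p = (if left then 0 else 1 :: nat)"
  have "hE D ! j0 = (arrange left [None] [Some b] ! p, [[g0, g1, g2] ! p, [g0, g1, g2] ! Suc p])"
    using is_path_frame_edges[OF D _ j0] by (simp add: p_def arrange_def)
  moreover have "p < length (arrange left [None] [Some b])" by (simp add: p_def arrange_def)
  ultimately obtain vs where "is_path (repl D j0 (map_hg Some F))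
      (take p (arrange left [None] [Some b]) @ map Some ys @ drop (Suc p) (arrange left [None] [Some b])) vs"
    using is_path_repl[OF D _ j0(1) _ is_path_map_hg[OF F(1)]] F(2) by blast
  then have "is_path (repl D j0 (map_hg Some F)) (map Some (arrange left ys [b])) vs"
    by (cases left) (simp_all add: p_def arrange_def)
  from is_path_map_hg[OF this, of the] show ?thesis by (auto simp: o_def)
qed

lemma is_path_repl_both:
  assumes M: "is_path M [a, b] [m0, m1, m2]" "length (hE M) = 2" "ja < 2"
      "hE M ! ja = (a, [m0, m1])" "hE M ! (1 - ja) = (b, [m1, m2])"
    and Ha: "is_path (Hs ja) ysa wsa" "ysa \<noteq> []"
    and Hb: "is_path (Hs (1 - ja)) ysb wsb" "ysb \<noteq> []"
  shows "\<exists>vs. is_path (repl_many M (\<lambda>j. Some (Hs j))) (ysa @ ysb) vs"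
proof -
  have "repl_many M (\<lambda>j. Some (Hs j)) = repl (repl M 1 (Hs 1)) 0 (Hs 0)"
    using M(2) by (rule repl_many_two_edges)
  moreover have edge0: "hE (repl M 1 H) ! 0 = hE M ! 0" "0 < length (hE (repl M 1 H))" for H
    using M(2) by (simp_all add: hE_repl nth_append)
  moreover have "\<exists>vs. is_path (repl (repl M 1 (Hs 1)) 0 (Hs 0)) (ysa @ ysb) vs"
  proof (cases "ja = 0")
    case True
    have "is_path M ([a] @ b # []) ([m0] @ m1 # m2 # [])" using M(1) by simp
    from is_path_repl_split[OF this _ _ _ Hb] M True
    have "is_path (repl M 1 (Hs 1)) ([] @ a # ysb) ([] @ m0 # m1 #
        map ((+) (fresh_base M)) (butlast (tl wsb)) @ [m2])" by simp
    from is_path_repl_split[OF this _ edge0(2) _ Ha] edge0(1) M True show ?thesis by auto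
  next
    case False
    then have ja: "ja = 1" using M(3) by simp
    have "is_path M ([] @ a # [b]) ([] @ m0 # m1 # [m2])" using M(1) by simp
    from is_path_repl_split[OF this _ _ _ Ha] M ja
    have p: "is_path (repl M 1 (Hs 1)) (ysa @ b # [])
        ((m0 # map ((+) (fresh_base M)) (butlast (tl wsa))) @ m1 # m2 # [])" by simp
    have "length (m0 # map ((+) (fresh_base M)) (butlast (tl wsa))) = length ysa"
      using Ha unfolding is_path_def by auto
    moreover have "hE (repl M 1 (Hs 1)) ! 0 = (b, [m1, m2])" using edge0(1) M ja by simp
    ultimately show ?thesis using is_path_repl_split[OF p _ edge0(2) _ Hb] ja by auto
  qed
  ultimately show ?thesis by simp
qed

section \<open>From L to HL\<close>

abbreviation HL_der_tr :: "ltp list \<Rightarrow> ltp \<Rightarrow> bool" where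
  "HL_der_tr \<Gamma> C \<equiv> HL_der (string_graph (map tr \<Gamma>)) (tr C)"

lemma HL_der_is_path_iff:
  assumes "is_path G (map tr \<Gamma>) vs" "\<Gamma> \<noteq> []"
  shows "HL_der G (tr C) \<longleftrightarrow> HL_der_tr \<Gamma> C"
proof -
  have "list_all2 teq (map tr \<Gamma>) (map tr \<Gamma>)" by (simp add: list.rel_refl teq_refl)
  then have "giso teq G (string_graph (map tr \<Gamma>))" "giso teq (string_graph (map tr \<Gamma>)) G"
    using is_path_giso assms(1) is_path_string_graph by blast+
  moreover have "wf_seq G (tr C)" "wf_seq (string_graph (map tr \<Gamma>)) (tr C)"
    using wf_seq_is_path assms is_path_string_graph by blast+
  ultimately show ?thesis using HL_iso teq_refl by blast
qed

lemma tr_ldiv_frame: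
  "is_path (string_graph (arrange left [None] [Some (tr B)]))
     (arrange left [None] [Some (tr B)]) [0, 1, 2]"
  using is_path_string_graph[of "arrange left [None] [Some (tr B)]"]
  by (cases left) (simp_all add: arrange_def numeral_2_eq_2 upt_rec)

lemma dollar_edge_tr_ldiv:
  "(if left then 0 else 1) < length (hE (string_graph (arrange left [None] [Some (tr B)])))"
  "fst (hE (string_graph (arrange left [None] [Some (tr B)])) ! (if left then 0 else 1)) = None"
  by (simp_all add: arrange_def string_graph_two)

lemma HL_der_tr_div_r:
  assumes "\<Psi> \<noteq> []" "HL_der_tr (arrange left \<Psi> [B]) A"
  shows "HL_der_tr \<Psi> (ldiv left A B)"
proof -
  define D where "D = string_graph (arrange left [None] [Some (tr B)])"
  define j0 where "j0 = (if left then 0 else 1 :: nat)"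
  define F where "F = string_graph (map tr \<Psi>)"
  note j0 = dollar_edge_tr_ldiv[of left B, folded D_def j0_def]
  obtain vs where "is_path (map_hg the (repl D j0 (map_hg Some F))) (arrange left (map tr \<Psi>) [tr B]) vs"
    using is_path_repl_dollar[OF tr_ldiv_frame[of left B, folded D_def] j0 is_path_string_graph]
      assms(1) unfolding F_def by fastforce
  then have "is_path (map_hg the (repl D j0 (map_hg Some F))) (map tr (arrange left \<Psi> [B])) vs"
    by (simp add: map_arrange)
  then have "HL_der (map_hg the (repl D j0 (map_hg Some F))) (tr A)"
    using HL_der_is_path_iff assms by (simp add: arrange_def)
  then have "HL_der F (HDiv (tr A) D)"
    using HL_div_r[OF _ j0] wf_tp_tr[of "ldiv left A B"]
      wf_seq_is_path[OF is_path_string_graph assms(1), of "ldiv left A B"]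
    by (simp add: tr_ldiv D_def F_def)
  then show ?thesis by (simp add: tr_ldiv D_def F_def)
qed

lemma is_path_repl_string_graph:
  assumes "k < length xs" "is_path H ys ws" "ys \<noteq> []"
  shows "\<exists>vs. is_path (repl (string_graph xs) k H) (take k xs @ ys @ drop (Suc k) xs) vs"
proof -
  have "hE (string_graph xs) ! k = (xs ! k, [[0..<Suc (length xs)] ! k, [0..<Suc (length xs)] ! Suc k])"
    using assms(1) by (simp add: string_graph_def del: upt_Suc)
  moreover have "k < length (hE (string_graph xs))" using assms(1) by (simp add: string_graph_def)
  ultimately show ?thesis using is_path_repl[OF is_path_string_graph assms(1) _ _ assms(2,3)] by blast
qed

lemma HL_der_tr_div_l:
  assumes "\<Psi> \<noteq> []" "HL_der_tr \<Psi> B" "HL_der_tr (\<Gamma> @ [A] @ \<Delta>) C"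
  shows "HL_der_tr (\<Gamma> @ arrange left [ldiv left A B] \<Psi> @ \<Delta>) C"
proof -
  define D where "D = string_graph (arrange left [None] [Some (tr B)])"
  define j0 where "j0 = (if left then 0 else 1 :: nat)"
  define Hs where "Hs = (\<lambda>j::nat. string_graph (map tr \<Psi>))"
  define H where "H = string_graph (map tr (\<Gamma> @ [A] @ \<Delta>))"
  define G where "G = repl H (length \<Gamma>) (instantiate_div (tr A) D j0 Hs)"
  note j0 = dollar_edge_tr_ldiv[of left B, folded D_def j0_def]
  have "is_path (Hs (1 - j0)) (map tr \<Psi>) [0..<Suc (length (map tr \<Psi>))]"
    unfolding Hs_def by (rule is_path_string_graph)
  then obtain ws where
    "is_path (instantiate_div (tr A) D j0 Hs) (arrange left [HDiv (tr A) D] (map tr \<Psi>)) ws"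
    using is_path_instantiate_div[OF tr_ldiv_frame[of left B, folded D_def] j0] assms(1) by blast
  then have "is_path (instantiate_div (tr A) D j0 Hs) (map tr (arrange left [ldiv left A B] \<Psi>)) ws"
    by (simp add: map_arrange tr_ldiv D_def)
  moreover have "length \<Gamma> < length (map tr (\<Gamma> @ [A] @ \<Delta>))" by simp
  moreover have "map tr (arrange left [ldiv left A B] \<Psi>) \<noteq> []" by (simp add: arrange_def)
  ultimately obtain vs where "is_path G (take (length \<Gamma>) (map tr (\<Gamma> @ [A] @ \<Delta>)) @
      map tr (arrange left [ldiv left A B] \<Psi>) @ drop (Suc (length \<Gamma>)) (map tr (\<Gamma> @ [A] @ \<Delta>))) vs"
    unfolding G_def H_def using is_path_repl_string_graph by blast
  then have G: "is_path G (map tr (\<Gamma> @ arrange left [ldiv left A B] \<Psi> @ \<Delta>)) vs" by simp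
  have "HL_der G (tr C)"
  proof (rule HL_div_l[OF _ j0 _ _ _ _ G_def[unfolded instantiate_div_def]])
    show "wf_tp (HDiv (tr A) D)" using wf_tp_tr[of "ldiv left A B"] by (simp add: tr_ldiv D_def)
    show "HL_der H (tr C)" using assms(3) by (simp add: H_def)
    show "length \<Gamma> < length (hE H)" "fst (hE H ! length \<Gamma>) = tr A"
      by (simp_all add: H_def string_graph_def nth_append)
    show "\<forall>j<length (hE D). j \<noteq> j0 \<longrightarrow> HL_der (Hs j) (the (fst (hE D ! j)))"
      using assms(2) by (auto simp: D_def j0_def Hs_def arrange_def string_graph_two less_Suc_eq)
    show "wf_seq G (tr C)" using wf_seq_is_path[OF G] by (simp add: arrange_def)
  qed
  then show ?thesis using HL_der_is_path_iff[OF G] by (simp add: arrange_def)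
qed

lemma HL_der_tr_pd_l:
  assumes "HL_der_tr (\<Gamma> @ [A, B] @ \<Delta>) C"
  shows "HL_der_tr (\<Gamma> @ [LPd A B] @ \<Delta>) C"
proof -
  define G where "G = string_graph (map tr (\<Gamma> @ [LPd A B] @ \<Delta>))"
  obtain vs where R: "is_path (repl G (length \<Gamma>) (string_graph [tr A, tr B])) (map tr (\<Gamma> @ [A, B] @ \<Delta>)) vs"
    using is_path_repl_string_graph[of "length \<Gamma>" "map tr (\<Gamma> @ [LPd A B] @ \<Delta>)",
        OF _ is_path_string_graph[of "[tr A, tr B]"]]
    by (auto simp: G_def)
  have "HL_der G (tr C)"
  proof (rule HL_times_l)
    show "length \<Gamma> < length (hE G)" "fst (hE G ! length \<Gamma>) = HTimes (string_graph [tr A, tr B])"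
      by (simp_all add: G_def string_graph_def nth_append)
    show "HL_der (repl G (length \<Gamma>) (string_graph [tr A, tr B])) (tr C)"
      using HL_der_is_path_iff[OF R] assms by simp
    show "wf_seq G (tr C)" unfolding G_def by (rule wf_seq_is_path[OF is_path_string_graph]) simp
  qed
  then show ?thesis by (simp add: G_def)
qed

lemma HL_der_tr_pd_r:
  assumes "\<Psi> \<noteq> []" "\<Phi> \<noteq> []" "HL_der_tr \<Psi> A" "HL_der_tr \<Phi> B"
  shows "HL_der_tr (\<Psi> @ \<Phi>) (LPd A B)"
proof -
  define M where "M = string_graph [tr A, tr B]"
  define Hs where "Hs = (\<lambda>j::nat. if j = 0 then string_graph (map tr \<Psi>) else string_graph (map tr \<Phi>))"
  define G where "G = repl_many M (\<lambda>j. Some (Hs j))"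
  have M: "is_path M [tr A, tr B] [0, 1, 2]"
    using is_path_string_graph[of "[tr A, tr B]"] by (simp add: M_def numeral_2_eq_2 upt_rec)
  have E: "length (hE M) = 2" "hE M ! 0 = (tr A, [0, 1])" "hE M ! (1 - 0) = (tr B, [1, 2])"
    by (simp_all add: M_def string_graph_two)
  have "is_path (Hs 0) (map tr \<Psi>) [0..<Suc (length (map tr \<Psi>))]"
    "is_path (Hs (1 - 0)) (map tr \<Phi>) [0..<Suc (length (map tr \<Phi>))]"
    using is_path_string_graph[of "map tr \<Psi>"] is_path_string_graph[of "map tr \<Phi>"]
    unfolding Hs_def by simp_all
  from is_path_repl_both[OF M E(1) _ E(2,3) this(1) _ this(2)] assms(1,2)
  obtain vs where G: "is_path G (map tr (\<Psi> @ \<Phi>)) vs" unfolding G_def by auto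
  have "HL_der G (HTimes M)"
  proof (rule HL_times_r[OF _ _ G_def])
    show "wf_tp (HTimes M)" using wf_tp_tr[of "LPd A B"] by (simp add: M_def)
    show "\<forall>j<length (hE M). HL_der (Hs j) (fst (hE M ! j))"
      using assms(3,4) by (auto simp: M_def string_graph_two Hs_def less_Suc_eq)
    show "wf_seq G (HTimes M)" using wf_seq_is_path[of G "\<Psi> @ \<Phi>" vs "LPd A B"] G assms(1)
      by (simp add: M_def)
  qed
  then show ?thesis using HL_der_is_path_iff[of G "\<Psi> @ \<Phi>" vs "LPd A B"] G assms(1) by (simp add: M_def)
qed

theorem L_der_imp_HL_der_tr: "L_der \<Gamma> C \<Longrightarrow> HL_der_tr \<Gamma> C"
proof (induction rule: L_der.induct)
  case (L_ax p)
  show ?case using HL_ax[of p 2] by (simp add: string_graph_single)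
next
  case (L_bs_l \<Theta> A \<Gamma> B \<Delta> C)
  then show ?case using HL_der_tr_div_l[of \<Theta> A \<Gamma> B \<Delta> C False] by (simp add: ldiv_def arrange_def)
next
  case (L_sl_l \<Theta> A \<Gamma> B \<Delta> C)
  then show ?case using HL_der_tr_div_l[of \<Theta> A \<Gamma> B \<Delta> C True] by (simp add: ldiv_def arrange_def)
next
  case (L_bs_r \<Theta> A B)
  then show ?case using HL_der_tr_div_r[of \<Theta> False A B] by (simp add: ldiv_def arrange_def)
next
  case (L_sl_r \<Theta> A B)
  then show ?case using HL_der_tr_div_r[of \<Theta> True A B] by (simp add: ldiv_def arrange_def)
next
  case (L_pd_l \<Gamma> A B \<Delta> C)
  then show ?case using HL_der_tr_pd_l by blast
next
  case (L_pd_r \<Theta> \<Psi> A B)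
  then show ?case by (intro HL_der_tr_pd_r)
qed

section \<open>From HL to L\<close>

abbreviation tr_of :: "htp \<Rightarrow> ltp \<Rightarrow> bool" where
  "tr_of T A \<equiv> teq T (tr A)"

definition tr_typed :: "htp hg \<Rightarrow> htp \<Rightarrow> bool" where
  "tr_typed G T \<longleftrightarrow> (\<forall>x\<in>set (hE G). \<exists>A. tr_of (fst x) A) \<and> (\<exists>A. tr_of T A)"

definition L_der_image :: "htp hg \<Rightarrow> htp \<Rightarrow> bool" where
  "L_der_image G T \<longleftrightarrow>
     (\<exists>\<Gamma> C ys vs. is_path G ys vs \<and> list_all2 tr_of ys \<Gamma> \<and> tr_of T C \<and> L_der \<Gamma> C)"

lemma tr_typed_label: "tr_typed G T \<Longrightarrow> l \<in> fst ` set (hE G) \<Longrightarrow> \<exists>A. tr_of l A"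
  unfolding tr_typed_def by auto

lemma tr_typedI:
  "(\<And>l. l \<in> fst ` set (hE G) \<Longrightarrow> \<exists>A. tr_of l A) \<Longrightarrow> \<exists>A. tr_of T A \<Longrightarrow> tr_typed G T"
  unfolding tr_typed_def by auto

lemma list_all2_tr_of_teq:
  assumes "list_all2 teq ys ys'" "list_all2 tr_of ys \<Gamma>" "\<forall>y\<in>set ys. wf_tp y"
  shows "list_all2 tr_of ys' \<Gamma>"
proof -
  have "tr_of (ys' ! k) (\<Gamma> ! k)" if k: "k < length ys'" for k
  proof -
    have k': "k < length ys" using assms(1) k by (simp add: list_all2_lengthD)
    have "teq (ys ! k) (ys' ! k)" "tr_of (ys ! k) (\<Gamma> ! k)"
      using assms(1,2) k k' by (auto simp: list_all2_conv_all_nth)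
    moreover have "wf_tp (ys ! k)" using assms(3) k' by simp
    ultimately show ?thesis using teq_sym teq_trans by blast
  qed
  then show ?thesis using assms(1,2) by (auto simp: list_all2_conv_all_nth)
qed

lemma teq_HTimes_tr:
  assumes "teq (HTimes M) (tr X)" "wf_tp (HTimes M)"
  obtains A1 B1 a b m0 m1 m2 where "X = LPd A1 B1" "tr_of a A1" "tr_of b B1" "wf_tp a" "wf_tp b"
    "is_path M [a, b] [m0, m1, m2]"
proof -
  from assms(1) obtain A1 B1 where X: "X = LPd A1 B1" "giso teq M (string_graph [tr A1, tr B1])"
    by (cases rule: teq_tr_cases) auto
  have wM: "wf_hg ok_tp M" "\<forall>x\<in>set (hE M). wf_tp (fst x)" using assms(2) by (auto elim: wf_tp.cases)
  obtain ys vs where p: "is_path M ys vs" "list_all2 teq ys [tr A1, tr B1]"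
    using giso_is_path_inv[OF X(2) is_path_string_graph] wM(1) unfolding wf_hg_def by blast
  then obtain a b m0 m1 m2 where "ys = [a, b]" "vs = [m0, m1, m2]" "tr_of a A1" "tr_of b B1"
    unfolding is_path_def by (auto simp: list_all2_Cons2 length_Suc_conv)
  moreover have "\<forall>l\<in>fst ` set (hE M). wf_tp l" using wM(2) by auto
  then have "wf_tp a" "wf_tp b" using is_path_labels[OF p(1)] \<open>ys = [a, b]\<close> by simp_all
  ultimately show ?thesis using that X(1) p(1) by blast
qed

lemma teq_HDiv_tr:
  assumes "teq (HDiv N D) (tr X)" "wf_tp (HDiv N D)"
  obtains left A1 B1 b g0 g1 g2 where "X = ldiv left A1 B1" "tr_of N A1" "wf_tp N"
    "tr_of b B1" "wf_tp b" "is_path D (arrange left [None] [Some b]) [g0, g1, g2]"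
proof -
  from assms(1) obtain left A1 B1 where X: "X = ldiv left A1 B1" "tr_of N A1"
    "giso (rel_option teq) D (string_graph (arrange left [None] [Some (tr B1)]))"
    by (cases rule: teq_tr_cases) auto
  have wD: "wf_tp N" "wf_hg ok_opt D" "\<forall>x\<in>set (hE D). \<forall>T. fst x = Some T \<longrightarrow> wf_tp T"
    using assms(2) by (auto elim: wf_tp.cases)
  obtain ys vs where p: "is_path D ys vs"
      "list_all2 (rel_option teq) ys (arrange left [None] [Some (tr B1)])"
    using giso_is_path_inv[OF X(3) is_path_string_graph] wD(2) unfolding wf_hg_def by blast
  then obtain b where ys: "ys = arrange left [None] [Some b]" "tr_of b B1"
    by (cases left) (auto simp: arrange_def list_all2_Cons2 option_rel_Some2)
  moreover obtain g0 g1 g2 where "vs = [g0, g1, g2]"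
    using p(1) ys(1) unfolding is_path_def by (auto simp: arrange_def length_Suc_conv split: if_splits)
  moreover have "Some b \<in> fst ` set (hE D)"
    using is_path_labels[OF p(1)] ys(1) by (simp add: arrange_def)
  then have "wf_tp b" using wD(3) by auto
  ultimately show ?thesis using that X wD(1) p(1) by blast
qed

lemma L_der_image_times_l:
  assumes i: "i < length (hE G)" "fst (hE G ! i) = HTimes F"
    and IH: "tr_typed (repl G i F) A \<Longrightarrow> L_der_image (repl G i F) A"
    and wf: "wf_seq G A" and typed: "tr_typed G A"
  shows "L_der_image G A"
proof -
  have wG: "finite (hV G)" "\<forall>e\<in>set (hE G). set (snd e) \<subseteq> hV G \<and> length (snd e) = tp_ar (fst e)"
    "\<forall>e\<in>set (hE G). wf_tp (fst e)"
    using wf unfolding wf_seq_def wf_hg_def ok_tp_def by auto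
  have "HTimes F \<in> fst ` set (hE G)" using i by (metis image_eqI nth_mem)
  then obtain X where "tr_of (HTimes F) X" using tr_typed_label[OF typed] by blast
  moreover have "wf_tp (HTimes F)" using wG(3) i by (metis nth_mem)
  ultimately obtain A1 B1 a b w0 w1 w2 where X: "X = LPd A1 B1" "tr_of a A1" "tr_of b B1"
    "wf_tp a" "wf_tp b" and F: "is_path F [a, b] [w0, w1, w2]"
    by (rule teq_HTimes_tr)
  have "tr_typed (repl G i F) A"
  proof (rule tr_typedI)
    fix l assume "l \<in> fst ` set (hE (repl G i F))"
    then have "l \<in> fst ` set (hE G) \<or> l = a \<or> l = b"
      unfolding labels_repl is_path_labels[OF F] by (auto dest: in_set_takeD in_set_dropD)
    then show "\<exists>A. tr_of l A" using tr_typed_label[OF typed] X by blast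
  qed (use typed in \<open>simp add: tr_typed_def\<close>)
  then obtain \<Gamma> C ys vs where ih: "is_path (repl G i F) ys vs" "list_all2 tr_of ys \<Gamma>"
    "tr_of A C" "L_der \<Gamma> C"
    using IH unfolding L_der_image_def by blast
  have "length (snd (hE G ! i)) = 2" "set (snd (hE G ! i)) \<subseteq> hV G"
    using wG(2) i is_path_wf(3)[OF F] by (metis nth_mem tp_ar.simps(3))+
  then obtain x y where xy: "snd (hE G ! i) = [x, y]" "{x, y} \<subseteq> hV G"
    by (auto simp: length_Suc_conv numeral_2_eq_2)
  obtain Y1 Y2 vs' where ys: "ys = Y1 @ a # b # Y2" and G: "is_path G (Y1 @ HTimes F # Y2) vs'"
    using is_path_repl_path_inv[OF ih(1) F i(1) xy wG(1)] i(2) by auto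
  obtain \<Gamma>1 A' B' \<Gamma>2 where \<Gamma>: "\<Gamma> = \<Gamma>1 @ A' # B' # \<Gamma>2" "list_all2 tr_of Y1 \<Gamma>1"
    "tr_of a A'" "tr_of b B'" "list_all2 tr_of Y2 \<Gamma>2"
    using ih(2) ys by (auto simp: list_all2_append1 list_all2_Cons1)
  have "A' = A1" "B' = B1" using teq_tr_unique \<Gamma>(3,4) X by blast+
  then have "L_der (\<Gamma>1 @ [LPd A1 B1] @ \<Gamma>2) C" using L_pd_l ih(4) \<Gamma>(1) by simp
  moreover have "list_all2 tr_of (Y1 @ HTimes F # Y2) (\<Gamma>1 @ [LPd A1 B1] @ \<Gamma>2)"
    using \<Gamma> \<open>tr_of (HTimes F) X\<close> X(1) by (simp add: list_all2_appendI)
  ultimately show ?thesis using G ih(3) unfolding L_der_image_def by blast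
qed

lemma L_der_image_times_r:
  assumes wM: "wf_tp (HTimes M)"
    and IH: "\<And>j. j < length (hE M) \<Longrightarrow> tr_typed (Hs j) (fst (hE M ! j)) \<Longrightarrow>
                 L_der_image (Hs j) (fst (hE M ! j))"
    and G: "G = repl_many M (\<lambda>j. Some (Hs j))" and typed: "tr_typed G (HTimes M)"
  shows "L_der_image G (HTimes M)"
proof -
  obtain X where tX: "tr_of (HTimes M) X" using typed unfolding tr_typed_def by blast
  then obtain A1 B1 a b m0 m1 m2 where X: "X = LPd A1 B1" "tr_of a A1" "tr_of b B1"
    "wf_tp a" "wf_tp b" and M: "is_path M [a, b] [m0, m1, m2]"
    using wM by (rule teq_HTimes_tr)
  obtain ja where ja: "ja < 2" "length (hE M) = 2" "hE M ! ja = (a, [m0, m1])"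
    "hE M ! (1 - ja) = (b, [m1, m2])"
    using is_path_two_edges_nth[OF M] by blast
  have G2: "G = repl (repl M 1 (Hs 1)) 0 (Hs 0)" using G repl_many_two_edges[OF ja(2)] by simp
  have IH': "\<exists>\<Gamma> ys ws. is_path (Hs j) ys ws \<and> list_all2 tr_of ys \<Gamma> \<and> L_der \<Gamma> C"
    if j: "j < 2" "fst (hE M ! j) = l" "tr_of l C" "wf_tp l" for j l C
  proof -
    have "fst ` set (hE (Hs j)) \<subseteq> fst ` set (hE G)"
      using labels_repl_many_two_edges[OF ja(2) j(1)] G by simp
    then have "tr_typed (Hs j) l"
      using tr_typed_label[OF typed] j(3) unfolding tr_typed_def by blast
    then obtain \<Gamma> C' ys ws where "is_path (Hs j) ys ws" "list_all2 tr_of ys \<Gamma>" "tr_of l C'" "L_der \<Gamma> C'"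
      using IH[of j] j(1,2) ja(2) unfolding L_der_image_def by auto
    moreover have "C' = C" using teq_tr_unique j(3,4) \<open>tr_of l C'\<close> by blast
    ultimately show ?thesis by blast
  qed
  obtain \<Gamma>a ysa wsa where a: "is_path (Hs ja) ysa wsa" "list_all2 tr_of ysa \<Gamma>a" "L_der \<Gamma>a A1"
    using IH'[of ja a A1] ja X by auto
  obtain \<Gamma>b ysb wsb where b: "is_path (Hs (1 - ja)) ysb wsb" "list_all2 tr_of ysb \<Gamma>b" "L_der \<Gamma>b B1"
    using IH'[of "1 - ja" b B1, OF _ _ X(3,5)] ja(4) by fastforce
  have ne: "\<Gamma>a \<noteq> []" "\<Gamma>b \<noteq> []" "ysa \<noteq> []" "ysb \<noteq> []"
    using L_der_nonempty a(2,3) b(2,3) by (auto simp: list_all2_lengthD)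
  obtain vs where "is_path G (ysa @ ysb) vs"
    using is_path_repl_both[OF M ja(2,1,3,4) a(1) ne(3) b(1) ne(4)] G by blast
  moreover have "list_all2 tr_of (ysa @ ysb) (\<Gamma>a @ \<Gamma>b)" using a(2) b(2) by (rule list_all2_appendI)
  moreover have "L_der (\<Gamma>a @ \<Gamma>b) (LPd A1 B1)" using L_pd_r ne(1,2) a(3) b(3) by blast
  ultimately show ?thesis using tX X(1) unfolding L_der_image_def by blast
qed

lemma tp_ar_HDiv_path:
  assumes "is_path D ys vs" "None \<in> set ys"
  shows "tp_ar (HDiv N D) = 2"
proof -
  obtain e where "e \<in> set (hE D)" "fst e = None"
    using is_path_labels[OF assms(1)] assms(2) by force
  then obtain x xs where x: "filter (\<lambda>x. fst x = None) (hE D) = x # xs"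
    by (cases "filter (\<lambda>x. fst x = None) (hE D)") (auto simp: filter_empty_conv)
  then have "x \<in> set (hE D)" by (metis filter_is_subset list.set_intros(1) subsetD)
  then show ?thesis using x is_path_wf(4)[OF assms(1)] by simp
qed

lemma wf_seq_two_ext:
  assumes "wf_seq F T" "tp_ar T = 2"
  obtains e0 e1 where "hext F = [e0, e1]" "e0 \<noteq> e1" "{e0, e1} \<subseteq> hV F"
    "\<forall>e\<in>set (hE F). set (snd e) \<subseteq> hV F"
  using assms unfolding wf_seq_def wf_hg_def by (auto simp: numeral_2_eq_2 length_Suc_conv)

lemma L_der_image_div_r:
  assumes wD: "wf_tp (HDiv N D)" and j0: "j0 < length (hE D)" "fst (hE D ! j0) = None"
    and IH: "tr_typed (map_hg the (repl D j0 (map_hg Some F))) N \<Longrightarrow>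
             L_der_image (map_hg the (repl D j0 (map_hg Some F))) N"
    and wF: "wf_seq F (HDiv N D)" and typed: "tr_typed F (HDiv N D)"
  shows "L_der_image F (HDiv N D)"
proof -
  obtain X where tX: "tr_of (HDiv N D) X" using typed unfolding tr_typed_def by blast
  then obtain left A1 B1 b g0 g1 g2 where X: "X = ldiv left A1 B1" "tr_of N A1" "wf_tp N"
    "tr_of b B1" "wf_tp b" and D: "is_path D (arrange left [None] [Some b]) [g0, g1, g2]"
    using wD by (rule teq_HDiv_tr)
  define D2 where "D2 = map_hg the D"
  note E = is_path_frame_edges[OF D _ j0]
  have R: "map_hg the (repl D j0 (map_hg Some F)) = repl D2 j0 F"
    using map_hg_repl[OF j0(1), of the "map_hg Some F"] by (simp add: D2_def map_hg_the_Some)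
  have D2: "is_path D2 (arrange left [the None] [b]) [g0, g1, g2]"
    using is_path_map_hg[OF D, of the] by (simp add: D2_def map_arrange)
  have e2: "j0 < length (hE D2)" "hE D2 ! j0 = (the None, if left then [g0, g1] else [g1, g2])"
    "hE D2 ! (1 - j0) = (b, if left then [g1, g2] else [g0, g1])"
    using E j0 by (simp_all add: D2_def hg.map_sel)
  have "tr_typed (repl D2 j0 F) N"
  proof (rule tr_typedI)
    have "set (take j0 (hE D2) @ drop (Suc j0) (hE D2)) = {hE D2 ! (1 - j0)}"
      using take_drop_two[of "hE D2" j0] E(1) j0(1) by (simp add: D2_def hg.map_sel)
    then have "fst ` set (hE (repl D2 j0 F)) = insert b (fst ` set (hE F))"
      unfolding labels_repl using e2(3) by simp
    then show "\<exists>A. tr_of l A" if "l \<in> fst ` set (hE (repl D2 j0 F))" for l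
      using that tr_typed_label[OF typed] X(4) by auto
  qed (use X in blast)
  then obtain \<Gamma> C ys vs where ih: "is_path (repl D2 j0 F) ys vs" "list_all2 tr_of ys \<Gamma>"
    "tr_of N C" "L_der \<Gamma> C"
    using IH unfolding R L_der_image_def by blast
  have "C = A1" using teq_tr_unique ih(3) X(2,3) by blast
  obtain e0 e1 where F: "hext F = [e0, e1]" "e0 \<noteq> e1" "{e0, e1} \<subseteq> hV F"
    "\<forall>e\<in>set (hE F). set (snd e) \<subseteq> hV F"
    using wf_seq_two_ext[OF wF] tp_ar_HDiv_path[OF D] by (auto simp: arrange_def)
  obtain ys' ws where ys: "ys = arrange left ys' [b]" "ys' \<noteq> []" and pF: "is_path F ys' ws"
    using is_path_repl_frame_inv[OF D2 e2(1,2) F ih(1)] by blast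
  obtain \<Gamma>' B' where \<Gamma>: "\<Gamma> = arrange left \<Gamma>' [B']" "list_all2 tr_of ys' \<Gamma>'" "tr_of b B'"
    using ih(2) ys(1) by (cases left) (auto simp: arrange_def list_all2_append1 list_all2_Cons1)
  have "B' = B1" using teq_tr_unique \<Gamma>(3) X(4,5) by blast
  moreover have "\<Gamma>' \<noteq> []" using ys(2) \<Gamma>(2) by (auto simp: list_all2_lengthD)
  ultimately have "L_der \<Gamma>' (ldiv left A1 B1)"
    using L_div_r ih(4) \<Gamma>(1) \<open>C = A1\<close> by blast
  then show ?thesis using pF \<Gamma>(2) tX X(1) unfolding L_der_image_def by blast
qed

lemma tr_typed_repl_host:
  assumes typed: "tr_typed (repl H i K) A" and i: "i < length (hE H)" "tr_of (fst (hE H ! i)) A1"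
  shows "tr_typed H A"
proof (rule tr_typedI)
  fix l assume "l \<in> fst ` set (hE H)"
  then obtain k where k: "k < length (hE H)" "l = fst (hE H ! k)" by (auto simp: in_set_conv_nth)
  show "\<exists>A. tr_of l A"
  proof (cases "k = i")
    case False
    have "hE H ! k \<in> set (take i (hE H) @ drop (Suc i) (hE H))"
      using k(1) False by (rule nth_mem_remove_nth)
    then show ?thesis using tr_typed_label[OF typed] k(2) unfolding labels_repl by blast
  next
    case True
    then show ?thesis using k(2) i(2) by auto
  qed
qed (use typed in \<open>simp add: tr_typed_def\<close>)

lemma instantiate_div_tr_inv:
  assumes wD: "wf_tp (HDiv N D)" and j0: "j0 < length (hE D)" "fst (hE D ! j0) = None"
    and IHs: "\<And>j. j < length (hE D) \<Longrightarrow> j \<noteq> j0 \<Longrightarrow> tr_typed (Hs j) (the (fst (hE D ! j))) \<Longrightarrow>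
                 L_der_image (Hs j) (the (fst (hE D ! j)))"
    and labels: "\<And>l. l \<in> fst ` set (hE (instantiate_div N D j0 Hs)) \<Longrightarrow> \<exists>A. tr_of l A"
  obtains left A1 B1 \<Psi> ys ws where "tr_of N A1" "wf_tp N" "tr_of (HDiv N D) (ldiv left A1 B1)"
    "is_path (instantiate_div N D j0 Hs) (arrange left [HDiv N D] ys) ws"
    "list_all2 tr_of ys \<Psi>" "\<Psi> \<noteq> []" "L_der \<Psi> B1"
proof -
  obtain X where tX: "tr_of (HDiv N D) X"
    using labels[OF HDiv_mem_labels_instantiate_div[OF j0(1), of N Hs]] by blast
  then obtain left A1 B1 b g0 g1 g2 where X: "X = ldiv left A1 B1" "tr_of N A1" "wf_tp N"
    "tr_of b B1" "wf_tp b" and D: "is_path D (arrange left [None] [Some b]) [g0, g1, g2]"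
    using wD by (rule teq_HDiv_tr)
  note E = is_path_frame_edges[OF D _ j0]
  define j1 where "j1 = 1 - j0"
  have j1: "j1 < length (hE D)" "j1 \<noteq> j0" "the (fst (hE D ! j1)) = b" using E j0 by (auto simp: j1_def)
  have "fst ` set (hE (Hs j1)) \<subseteq> fst ` set (hE (instantiate_div N D j0 Hs))"
    using labels_instantiate_div[OF E(1), of j0 Hs N] j0(1) E(1) by (simp add: j1_def)
  then have "tr_typed (Hs j1) b" using labels X(4) by (intro tr_typedI) blast+
  then obtain \<Psi> B' ys ws where P: "is_path (Hs j1) ys ws" "list_all2 tr_of ys \<Psi>"
    "tr_of b B'" "L_der \<Psi> B'"
    using IHs[OF j1(1,2)] j1(3) unfolding L_der_image_def by auto
  have "B' = B1" using teq_tr_unique P(3) X(4,5) by blast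
  have ne: "\<Psi> \<noteq> []" "ys \<noteq> []" using L_der_nonempty[OF P(4)] P(2) by (auto simp: list_all2_lengthD)
  obtain ws' where "is_path (instantiate_div N D j0 Hs) (arrange left [HDiv N D] ys) ws'"
    using is_path_instantiate_div[where Hs = Hs and N = N, OF D j0 P(1)[unfolded j1_def] ne(2)]
    by blast
  moreover have "tr_of (HDiv N D) (ldiv left A1 B1)" using tX X(1) by simp
  ultimately show ?thesis using that X(2,3) P(2,4) ne(1) \<open>B' = B1\<close> by blast
qed

lemma L_der_image_div_l:
  assumes wD: "wf_tp (HDiv N D)" and j0: "j0 < length (hE D)" "fst (hE D ! j0) = None"
    and IH: "tr_typed H A \<Longrightarrow> L_der_image H A"
    and i: "i < length (hE H)" "fst (hE H ! i) = N"
    and IHs: "\<And>j. j < length (hE D) \<Longrightarrow> j \<noteq> j0 \<Longrightarrow> tr_typed (Hs j) (the (fst (hE D ! j))) \<Longrightarrow>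
                 L_der_image (Hs j) (the (fst (hE D ! j)))"
    and G: "G = repl H i (instantiate_div N D j0 Hs)" and typed: "tr_typed G A"
  shows "L_der_image G A"
proof -
  have "fst ` set (hE (instantiate_div N D j0 Hs)) \<subseteq> fst ` set (hE G)"
    unfolding G labels_repl by blast
  then have labels: "\<exists>A. tr_of l A" if "l \<in> fst ` set (hE (instantiate_div N D j0 Hs))" for l
    using that tr_typed_label[OF typed] by blast
  obtain left A1 B1 \<Psi> ysP ws where X: "tr_of N A1" "wf_tp N" "tr_of (HDiv N D) (ldiv left A1 B1)"
    and Inner: "is_path (instantiate_div N D j0 Hs) (arrange left [HDiv N D] ysP) ws"
    and P: "list_all2 tr_of ysP \<Psi>" "\<Psi> \<noteq> []" "L_der \<Psi> B1"
    by (rule instantiate_div_tr_inv[OF wD j0 IHs labels])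
  have "tr_typed H A" using tr_typed_repl_host[OF typed[unfolded G] i(1)] i(2) X(1) by blast
  then obtain \<Gamma>H C ysH vsH where ih: "is_path H ysH vsH" "list_all2 tr_of ysH \<Gamma>H"
    "tr_of A C" "L_der \<Gamma>H C"
    using IH unfolding L_der_image_def by blast
  obtain k where k: "k < length ysH" "hE H ! i = (ysH ! k, [vsH ! k, vsH ! Suc k])"
    using is_path_edge[OF ih(1) nth_mem[OF i(1)]] by blast
  have "tr_of N (\<Gamma>H ! k)" using ih(2) k i(2) by (auto simp: list_all2_conv_all_nth)
  then have "\<Gamma>H ! k = A1" using teq_tr_unique X(1,2) by blast
  moreover have "k < length \<Gamma>H" using k(1) ih(2) by (simp add: list_all2_lengthD)
  ultimately have "L_der (take k \<Gamma>H @ [A1] @ drop (Suc k) \<Gamma>H) C"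
    using ih(4) id_take_nth_drop by fastforce
  then have "L_der (take k \<Gamma>H @ arrange left [ldiv left A1 B1] \<Psi> @ drop (Suc k) \<Gamma>H) C"
    using L_div_l[OF P(2,3)] by blast
  moreover have "arrange left [HDiv N D] ysP \<noteq> []" by (simp add: arrange_def)
  then obtain vsG where "is_path G (take k ysH @ arrange left [HDiv N D] ysP @ drop (Suc k) ysH) vsG"
    using is_path_repl[OF ih(1) k(1) i(1) k(2) Inner] G by blast
  moreover have "list_all2 tr_of (take k ysH @ arrange left [HDiv N D] ysP @ drop (Suc k) ysH)
      (take k \<Gamma>H @ arrange left [ldiv left A1 B1] \<Psi> @ drop (Suc k) \<Gamma>H)"
    using ih(2) P(1) X(3)
    by (auto simp: arrange_def intro!: list_all2_appendI list_all2_takeI list_all2_dropI)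
  ultimately show ?thesis using ih(3) unfolding L_der_image_def by blast
qed

lemma L_der_image_iso:
  assumes IH: "tr_typed H A \<Longrightarrow> L_der_image H A" and wf: "wf_seq H A"
    and iso: "giso teq H H'" "teq A A'" and typed: "tr_typed H' A'"
  shows "L_der_image H' A'"
proof -
  have "tr_typed H A"
  proof (rule tr_typedI)
    fix l assume "l \<in> fst ` set (hE H)"
    then obtain e' where "e' \<in> set (hE H')" "teq l (fst e')"
      using giso_labels[OF iso(1)] by force
    then show "\<exists>B. tr_of l B" using typed teq_trans unfolding tr_typed_def by blast
  qed (use iso(2) typed teq_trans in \<open>unfold tr_typed_def, blast\<close>)
  then obtain \<Gamma> C ys vs where ih: "is_path H ys vs" "list_all2 tr_of ys \<Gamma>" "tr_of A C" "L_der \<Gamma> C"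
    using IH unfolding L_der_image_def by blast
  obtain ys' vs' where p': "is_path H' ys' vs'" "list_all2 teq ys ys'"
    using giso_is_path[OF iso(1) ih(1)] by blast
  have "\<forall>l\<in>fst ` set (hE H). wf_tp l" using wf unfolding wf_seq_def by auto
  then have "\<forall>y\<in>set ys. wf_tp y" using is_path_labels[OF ih(1)] by simp
  then have "list_all2 tr_of ys' \<Gamma>" using list_all2_tr_of_teq p'(2) ih(2) by blast
  moreover have "tr_of A' C" using teq_sym[OF iso(2)] wf ih(3) teq_trans unfolding wf_seq_def by blast
  ultimately show ?thesis using p'(1) ih(4) unfolding L_der_image_def by blast
qed

theorem HL_der_imp_L_der_image: "HL_der G T \<Longrightarrow> tr_typed G T \<Longrightarrow> L_der_image G T"
proof (induction rule: HL_der.induct)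
  case (HL_ax a n)
  then obtain X where "tr_of (HPr a n) X" unfolding tr_typed_def by blast
  then have "X = LPr a" "n = 2" by (cases X; auto elim: teq.cases)+
  moreover have "is_path (handle (HPr a 2) 2) [HPr a 2] [0..<Suc (length [HPr a 2])]"
    using is_path_string_graph[of "[HPr a 2]"] by (simp add: string_graph_single)
  ultimately show ?case unfolding L_der_image_def
    by (intro exI[of _ "[LPr a]"] exI[of _ "LPr a"] exI[of _ "[HPr a 2]"])
       (auto simp: teq_refl intro: L_ax)
next
  case (HL_div_l N D j0 H A i Hs G)
  have G: "G = repl H i (instantiate_div N D j0 Hs)"
    using HL_div_l.hyps(7) by (simp add: instantiate_div_def)
  have IHs: "\<And>j. j < length (hE D) \<Longrightarrow> j \<noteq> j0 \<Longrightarrow> tr_typed (Hs j) (the (fst (hE D ! j))) \<Longrightarrow>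
      L_der_image (Hs j) (the (fst (hE D ! j)))"
    using HL_div_l.IH(2) by blast
  show ?case
    by (rule L_der_image_div_l[OF HL_div_l.hyps(1-3) HL_div_l.IH(1) HL_div_l.hyps(5,6) IHs G
          HL_div_l.prems])
next
  case (HL_div_r N D j0 F)
  show ?case
    by (rule L_der_image_div_r[OF HL_div_r.hyps(1-3) HL_div_r.IH HL_div_r.hyps(5) HL_div_r.prems])
next
  case (HL_times_l i G F A)
  show ?case
    by (rule L_der_image_times_l[OF HL_times_l.hyps(1,2) HL_times_l.IH HL_times_l.hyps(4)
          HL_times_l.prems])
next
  case (HL_times_r M Hs G)
  show ?case
    by (rule L_der_image_times_r[OF HL_times_r.hyps(1) _ HL_times_r.hyps(2) HL_times_r.prems])
       (use HL_times_r.IH in blast)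
next
  case (HL_iso H A H' A')
  show ?case
    by (rule L_der_image_iso[OF HL_iso.IH HL_der_wf_seq[OF HL_iso.hyps(1)] HL_iso.hyps(2,3)
          HL_iso.prems])
qed

theorem theorem1:
  shows "(\<forall>\<Gamma> C. L_der \<Gamma> C \<longrightarrow> HL_der (fst (tr_seq \<Gamma> C)) (snd (tr_seq \<Gamma> C)))
       \<and> (\<forall>G T. HL_der G T
            \<longrightarrow> (\<forall>x\<in>set (hE G). \<exists>A. teq (fst x) (tr A))
            \<longrightarrow> (\<exists>A. teq T (tr A))
            \<longrightarrow> (\<exists>\<Gamma> C. giso teq G (fst (tr_seq \<Gamma> C)) \<and> teq T (snd (tr_seq \<Gamma> C))
                       \<and> L_der \<Gamma> C))"
proof (intro conjI allI impI)
  fix \<Gamma> C assume "L_der \<Gamma> C"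
  then show "HL_der (fst (tr_seq \<Gamma> C)) (snd (tr_seq \<Gamma> C))"
    using L_der_imp_HL_der_tr by (simp add: tr_seq_def)
next
  fix G T assume "HL_der G T" "\<forall>x\<in>set (hE G). \<exists>A. teq (fst x) (tr A)" "\<exists>A. teq T (tr A)"
  then have "L_der_image G T" using HL_der_imp_L_der_image unfolding tr_typed_def by blast
  then obtain \<Gamma> C ys vs where G: "is_path G ys vs" "list_all2 tr_of ys \<Gamma>" "tr_of T C" "L_der \<Gamma> C"
    unfolding L_der_image_def by blast
  have "list_all2 teq ys (map tr \<Gamma>)" using G(2) by (simp add: list_all2_map2)
  then have "giso teq G (string_graph (map tr \<Gamma>))" by (rule is_path_giso[OF G(1) is_path_string_graph])
  then show "\<exists>\<Gamma> C. giso teq G (fst (tr_seq \<Gamma> C)) \<and> teq T (snd (tr_seq \<Gamma> C)) \<and> L_der \<Gamma> C"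
    using G(3,4) by (auto simp: tr_seq_def)
qed

end
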